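(* Let $\Lambda$ be a row-finite $k$-graph with no sources. Suppose that the infinite path space $\Lambda^\infty$ admits a $\Lambda$-projective system on $(\Lambda^\infty,\mu)$, for some Radon measure $\mu$ such that all cylinder sets have finite measure, with the standard prefixing maps $\{\sigma_\lambda\}$, standard coding maps $\{\sigma^n\}_{n\in\mathbb{N}^k}$, and functions $\{f_\lambda\}$, and let $\{T_\lambda\}$ be the associated operators $T_\lambda f=f_\lambda\cdot(f\circ\sigma^{d(\lambda)})$. Let $E \subseteq \Lambda^\infty$ be a measurable set with $\mu(E\,\Delta\,(\sigma^n)^{-1}(E))=0$ for all $n\in\mathbb{N}^k$ and $\mu(E\cap Z(v))>0$ for all $v\in\Lambda^0$, so that the restriction $\{T_\lambda^E\}_{\lambda \in \Lambda}$ of the $\Lambda$-projective representation to $L^2(E, \mu)$ (i.e. the one associated to the restricted system on $(\Lambda^\infty,\mu_E)$) is again a $\Lambda$-projective representation. Then (a) the commutant of $\{T_\lambda^E: \lambda \in \Lambda\}$ consists of multiplication operators by functions $h$ with $h \circ \sigma^n = h$ $\mu_E$-a.e. for all $n\in \mathbb{N}^k$; (b) if $\sigma^n$ is ergodic with respect to $\mu_E$ for some $n \in \mathbb{N}^k$, then $\{T_\lambda^E\}_{\lambda \in \Lambda}$ is irreducible; (c) if $\{\sigma^n\}_{n\in\mathbb{N}^k}$ is jointly ergodic with respect to $\mu_E$, then $\{T_\lambda^E\}_{\lambda \in \Lambda}$ is irreducible.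
   Context: A $k$-graph is a countable small category $\Lambda$ with a functor $d:\Lambda\to\mathbb{N}^k$ with unique factorization; $\Lambda^0$ vertices, $r,s$ range/source, $v\Lambda^n$ paths of degree $n$ with range $v$; row-finite: finite; no sources: nonempty. $C^*(\Lambda)$ is the universal $C^*$-algebra of partial isometries $s_\lambda$ satisfying the Cuntz–Krieger relations ($\{s_v\}$ orthogonal projections, $s_\lambda s_\eta=s_{\lambda\eta}$, $s_\lambda^*s_\lambda=s_{s(\lambda)}$, $s_v=\sum_{\lambda\in v\Lambda^n}s_\lambda s_\lambda^*$). $\Lambda^\infty$: degree-preserving functors $x:\Omega_k\to\Lambda$ ($\Omega_k$ has morphisms $(m,n)$ with $m\le n$ in $\mathbb{N}^k$, $d(m,n)=n-m$), $r(x)=x(0)$; cylinder sets $Z(\lambda)=\{x: x(0,d(\lambda))=\lambda\}$ give a locally compact Hausdorff topology and Borel structure. Standard coding maps $\sigma^n(x)(p,q)=x(p+n,q+n)$; standard prefixing maps $\sigma_\lambda:Z(s(\lambda))\to Z(\lambda)$, $x\mapsto\lambda x$. A $\Lambda$-projective system on $(X,\mu)$ with prefixing maps $\tau_\lambda:D_\lambda\to R_\lambda$ and coding maps $\tau^n$ is a $\Lambda$-semibranching function system (for each $n$, $\{\tau_\lambda:d(\lambda)=n\}$ is a semibranching function system with coding map $\tau^n$, i.e. $0<\mu(D_\lambda)<\infty$, ranges $R_\lambda$ of finite measure, a.e. disjoint, covering $X$ a.e., $d(\mu\circ\tau_\lambda)/d\mu>0$ a.e., $\tau^n\circ\tau_\lambda=\mathrm{id}$;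 $\tau_v=\mathrm{id}$; $\tau_\lambda\tau_\nu=\tau_{\lambda\nu}$ a.e.; $\tau^m\tau^n=\tau^{m+n}$) together with $f_\lambda\in L^2$ with $0\ne d(\mu\circ\tau_\lambda^{-1})/d\mu=|f_\lambda|^2$ and $f_\lambda(f_\nu\circ\tau^{d(\lambda)})=f_{\lambda\nu}$. For a measurable $E$, $\mu_E(B)=\mu(B\cap E)$. A map $T$ is ergodic w.r.t. $\mu_E$ if every measurable $A$ with $\mu_E(A\,\Delta\,T^{-1}(A))=0$ has $\mu_E(A)=0$ or $\mu_E(\Lambda^\infty\setminus A)=0$; a family is jointly ergodic if the same holds for sets invariant (in this sense) under every member of the family. *)

theory Defs
  imports "HOL-Analysis.Analysis" "HOL-Probability.Probability" "HOL-Library.Function_Algebras"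
begin

text \<open>Degrees live in N^k, represented as functions nat => nat vanishing from k on.
  Order, addition, subtraction and 0 are pointwise.\<close>

definition Nk :: "nat \<Rightarrow> (nat \<Rightarrow> nat) set" where
  "Nk k = {n. \<forall>i\<ge>k. n i = 0}"

text \<open>A k-graph as a small category: vertices (objects), paths (morphisms), range, source,
  degree functor, composition (cmp a b = "a b", defined when src a = rng b) and identities.\<close>

record ('v, 'p) kgraph =
  verts :: "'v set"
  paths :: "'p set"
  rng :: "'p \<Rightarrow> 'v"
  src :: "'p \<Rightarrow> 'v"
  deg :: "'p \<Rightarrow> nat \<Rightarrow> nat"
  cmp :: "'p \<Rightarrow> 'p \<Rightarrow> 'p"
  idp :: "'v \<Rightarrow> 'p"

definition kgraph :: "nat \<Rightarrow> ('v, 'p) kgraph \<Rightarrow> bool" where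
  "kgraph k G \<longleftrightarrow>
     countable (paths G) \<and>
     (\<forall>v\<in>verts G. idp G v \<in> paths G \<and> rng G (idp G v) = v \<and> src G (idp G v) = v
                   \<and> deg G (idp G v) = 0) \<and>
     (\<forall>l\<in>paths G. rng G l \<in> verts G \<and> src G l \<in> verts G \<and> deg G l \<in> Nk k) \<and>
     (\<forall>a\<in>paths G. \<forall>b\<in>paths G. src G a = rng G b \<longrightarrow>
        cmp G a b \<in> paths G \<and> rng G (cmp G a b) = rng G a \<and> src G (cmp G a b) = src G b
        \<and> deg G (cmp G a b) = deg G a + deg G b) \<and>
     (\<forall>a\<in>paths G. \<forall>b\<in>paths G. \<forall>c\<in>paths G. src G a = rng G b \<longrightarrow> src G b = rng G c \<longrightarrow>
        cmp G (cmp G a b) c = cmp G a (cmp G b c)) \<and>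
     (\<forall>l\<in>paths G. cmp G (idp G (rng G l)) l = l \<and> cmp G l (idp G (src G l)) = l) \<and>
     (\<forall>l\<in>paths G. \<forall>m\<in>Nk k. \<forall>n\<in>Nk k. deg G l = m + n \<longrightarrow>
        (\<exists>!(a, b). a \<in> paths G \<and> b \<in> paths G \<and> src G a = rng G b \<and>
                   deg G a = m \<and> deg G b = n \<and> cmp G a b = l))"

definition row_finite_no_sources :: "nat \<Rightarrow> ('v, 'p) kgraph \<Rightarrow> bool" where
  "row_finite_no_sources k G \<longleftrightarrow>
     (\<forall>v\<in>verts G. \<forall>n\<in>Nk k.
        finite {l\<in>paths G. rng G l = v \<and> deg G l = n} \<and>
        {l\<in>paths G. rng G l = v \<and> deg G l = n} \<noteq> {})"

text \<open>An infinite path is a degree-preserving functor from Omega_k; the morphism (m,n), m \<le> n,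
  is sent to x m n.  Off the morphisms of Omega_k the function is fixed to undefined.\<close>

type_synonym 'p ipath = "(nat \<Rightarrow> nat) \<Rightarrow> (nat \<Rightarrow> nat) \<Rightarrow> 'p"

definition inf_paths :: "nat \<Rightarrow> ('v, 'p) kgraph \<Rightarrow> 'p ipath set" where
  "inf_paths k G = {x.
     (\<forall>m n. if m \<le> n \<and> m \<in> Nk k \<and> n \<in> Nk k
            then x m n \<in> paths G \<and> deg G (x m n) = n - m
            else x m n = undefined) \<and>
     (\<forall>m\<in>Nk k. x m m \<in> idp G ` verts G) \<and>
     (\<forall>m\<in>Nk k. \<forall>n\<in>Nk k. \<forall>p\<in>Nk k. m \<le> n \<longrightarrow> n \<le> p \<longrightarrow>
        src G (x m n) = rng G (x n p) \<and> cmp G (x m n) (x n p) = x m p)}"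

definition cyl :: "nat \<Rightarrow> ('v, 'p) kgraph \<Rightarrow> 'p \<Rightarrow> 'p ipath set" where
  "cyl k G l = {x \<in> inf_paths k G. x 0 (deg G l) = l}"

definition shift :: "nat \<Rightarrow> (nat \<Rightarrow> nat) \<Rightarrow> 'p ipath \<Rightarrow> 'p ipath" where
  "shift k n x = (\<lambda>p q. if p \<le> q \<and> p \<in> Nk k \<and> q \<in> Nk k then x (p + n) (q + n) else undefined)"

text \<open>Standard prefixing map sigma_l : Z(s(l)) \<rightarrow> Z(l), x \<mapsto> l x (the unique infinite path
  whose initial segment of degree d(l) is l and whose d(l)-shift is x).\<close>
definition prefix :: "nat \<Rightarrow> ('v, 'p) kgraph \<Rightarrow> 'p \<Rightarrow> 'p ipath \<Rightarrow> 'p ipath" where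
  "prefix k G l x = (THE y. y \<in> inf_paths k G \<and> y 0 (deg G l) = l \<and> shift k (deg G l) y = x)"

definition symdiff :: "'a set \<Rightarrow> 'a set \<Rightarrow> 'a set" where
  "symdiff A B = (A - B) \<union> (B - A)"

definition SBFS_deg ::
  "nat \<Rightarrow> ('v, 'p) kgraph \<Rightarrow> 'x measure \<Rightarrow> ('p \<Rightarrow> 'x set) \<Rightarrow> ('p \<Rightarrow> 'x set)
   \<Rightarrow> ('p \<Rightarrow> 'x \<Rightarrow> 'x) \<Rightarrow> ((nat \<Rightarrow> nat) \<Rightarrow> 'x \<Rightarrow> 'x) \<Rightarrow> (nat \<Rightarrow> nat) \<Rightarrow> bool" where
  "SBFS_deg k G M D R tau cod n \<longleftrightarrow>
     cod n \<in> measurable M M \<and>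
     (\<forall>l\<in>paths G. deg G l = n \<longrightarrow>
        D l \<in> sets M \<and> R l \<in> sets M \<and>
        0 < emeasure M (D l) \<and> emeasure M (D l) < \<infinity> \<and> emeasure M (R l) < \<infinity> \<and>
        tau l \<in> measurable (restrict_space M (D l)) M \<and> tau l ` D l = R l \<and>
        (\<exists>g \<in> borel_measurable M. (AE x in M. x \<in> D l \<longrightarrow> g x > 0) \<and>
           (\<forall>B\<in>sets M. B \<subseteq> D l \<longrightarrow>
               tau l ` B \<in> sets M \<and> emeasure M (tau l ` B) = (\<integral>\<^sup>+ x\<in>B. g x \<partial>M))) \<and>
        (\<forall>x\<in>D l. cod n (tau l x) = x)) \<and>
     (\<forall>l\<in>paths G. \<forall>l'\<in>paths G. deg G l = n \<longrightarrow> deg G l' = n \<longrightarrow> l \<noteq> l' \<longrightarrow>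
        emeasure M (R l \<inter> R l') = 0) \<and>
     emeasure M (space M - (\<Union>l\<in>{l\<in>paths G. deg G l = n}. R l)) = 0"

definition Lambda_SBFS ::
  "nat \<Rightarrow> ('v, 'p) kgraph \<Rightarrow> 'x measure \<Rightarrow> ('p \<Rightarrow> 'x set) \<Rightarrow> ('p \<Rightarrow> 'x set)
   \<Rightarrow> ('p \<Rightarrow> 'x \<Rightarrow> 'x) \<Rightarrow> ((nat \<Rightarrow> nat) \<Rightarrow> 'x \<Rightarrow> 'x) \<Rightarrow> bool" where
  "Lambda_SBFS k G M D R tau cod \<longleftrightarrow>
     (\<forall>n\<in>Nk k. SBFS_deg k G M D R tau cod n) \<and>
     (\<forall>v\<in>verts G. \<forall>x\<in>D (idp G v). tau (idp G v) x = x) \<and>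
     (\<forall>a\<in>paths G. \<forall>b\<in>paths G. src G a = rng G b \<longrightarrow>
        (AE x in M. x \<in> D (cmp G a b) \<longrightarrow> tau a (tau b x) = tau (cmp G a b) x)) \<and>
     (\<forall>m\<in>Nk k. \<forall>n\<in>Nk k. \<forall>x\<in>space M. cod m (cod n x) = cod (m + n) x)"

text \<open>Square-integrable complex functions (representatives of L^2 classes).\<close>
definition L2 :: "'x measure \<Rightarrow> ('x \<Rightarrow> complex) set" where
  "L2 M = {g. g \<in> borel_measurable M \<and> integrable M (\<lambda>x. (cmod (g x))\<^sup>2)}"

definition Lambda_projective_system ::
  "nat \<Rightarrow> ('v, 'p) kgraph \<Rightarrow> 'x measure \<Rightarrow> ('p \<Rightarrow> 'x set) \<Rightarrow> ('p \<Rightarrow> 'x set)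
   \<Rightarrow> ('p \<Rightarrow> 'x \<Rightarrow> 'x) \<Rightarrow> ((nat \<Rightarrow> nat) \<Rightarrow> 'x \<Rightarrow> 'x) \<Rightarrow> ('p \<Rightarrow> 'x \<Rightarrow> complex) \<Rightarrow> bool" where
  "Lambda_projective_system k G M D R tau cod f \<longleftrightarrow>
     Lambda_SBFS k G M D R tau cod \<and>
     (\<forall>l\<in>paths G. f l \<in> L2 M \<and> \<not> (AE x in M. f l x = 0) \<and>
        (\<forall>B\<in>sets M. emeasure M (tau l -` B \<inter> D l) =
                     (\<integral>\<^sup>+ x\<in>B. ennreal ((cmod (f l x))\<^sup>2) \<partial>M))) \<and>
     (\<forall>a\<in>paths G. \<forall>b\<in>paths G. src G a = rng G b \<longrightarrow>
        (AE x in M. f a x * f b (cod (deg G a) x) = f (cmp G a b) x))"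

section \<open>Operators on L^2 (acting on representatives, modulo a.e. equality)\<close>

definition l2_inner :: "'x measure \<Rightarrow> ('x \<Rightarrow> complex) \<Rightarrow> ('x \<Rightarrow> complex) \<Rightarrow> complex" where
  "l2_inner M g h = (LINT x|M. g x * cnj (h x))"

definition l2_norm :: "'x measure \<Rightarrow> ('x \<Rightarrow> complex) \<Rightarrow> real" where
  "l2_norm M g = sqrt (LINT x|M. (cmod (g x))\<^sup>2)"

definition bounded_op :: "'x measure \<Rightarrow> (('x \<Rightarrow> complex) \<Rightarrow> ('x \<Rightarrow> complex)) \<Rightarrow> bool" where
  "bounded_op M A \<longleftrightarrow>
     (\<forall>g\<in>L2 M. A g \<in> L2 M) \<and>
     (\<forall>g\<in>L2 M. \<forall>h\<in>L2 M. (AE x in M. g x = h x) \<longrightarrow> (AE x in M. A g x = A h x)) \<and>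
     (\<forall>g\<in>L2 M. \<forall>h\<in>L2 M. AE x in M. A (\<lambda>y. g y + h y) x = A g x + A h x) \<and>
     (\<forall>g\<in>L2 M. \<forall>c. AE x in M. A (\<lambda>y. c * g y) x = c * A g x) \<and>
     (\<exists>C. \<forall>g\<in>L2 M. l2_norm M (A g) \<le> C * l2_norm M g)"

definition is_adjoint :: "'x measure \<Rightarrow> (('x \<Rightarrow> complex) \<Rightarrow> ('x \<Rightarrow> complex))
    \<Rightarrow> (('x \<Rightarrow> complex) \<Rightarrow> ('x \<Rightarrow> complex)) \<Rightarrow> bool" where
  "is_adjoint M T B \<longleftrightarrow> (\<forall>g\<in>L2 M. B g \<in> L2 M) \<and>
     (\<forall>g\<in>L2 M. \<forall>h\<in>L2 M. l2_inner M (T g) h = l2_inner M g (B h))"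

definition commutes :: "'x measure \<Rightarrow> (('x \<Rightarrow> complex) \<Rightarrow> ('x \<Rightarrow> complex))
    \<Rightarrow> (('x \<Rightarrow> complex) \<Rightarrow> ('x \<Rightarrow> complex)) \<Rightarrow> bool" where
  "commutes M A B \<longleftrightarrow> (\<forall>g\<in>L2 M. AE x in M. A (B g) x = B (A g) x)"

text \<open>Commutant of the representation (i.e. of the *-algebra generated by the operators):
  bounded operators commuting with every T and every adjoint T^*.\<close>
definition commutant :: "'x measure \<Rightarrow> (('x \<Rightarrow> complex) \<Rightarrow> ('x \<Rightarrow> complex)) set
    \<Rightarrow> (('x \<Rightarrow> complex) \<Rightarrow> ('x \<Rightarrow> complex)) set" where
  "commutant M Ts = {A. bounded_op M A \<and>
     (\<forall>T\<in>Ts. commutes M A T \<and> (\<forall>B. is_adjoint M T B \<longrightarrow> commutes M A B))}"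

definition irreducible_ops :: "'x measure \<Rightarrow> (('x \<Rightarrow> complex) \<Rightarrow> ('x \<Rightarrow> complex)) set \<Rightarrow> bool" where
  "irreducible_ops M Ts \<longleftrightarrow>
     (\<forall>A\<in>commutant M Ts. \<exists>c::complex. \<forall>g\<in>L2 M. AE x in M. A g x = c * g x)"

definition proj_rep_op :: "('v, 'p) kgraph \<Rightarrow> ((nat \<Rightarrow> nat) \<Rightarrow> 'x \<Rightarrow> 'x) \<Rightarrow> ('p \<Rightarrow> 'x \<Rightarrow> complex)
    \<Rightarrow> 'p \<Rightarrow> ('x \<Rightarrow> complex) \<Rightarrow> ('x \<Rightarrow> complex)" where
  "proj_rep_op G cod f l g = (\<lambda>x. f l x * g (cod (deg G l) x))"

definition restr_measure :: "'x measure \<Rightarrow> 'x set \<Rightarrow> 'x measure" where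
  "restr_measure M E = density M (indicator E)"

definition ergodic_wrt :: "'x measure \<Rightarrow> ('x \<Rightarrow> 'x) \<Rightarrow> bool" where
  "ergodic_wrt M T \<longleftrightarrow> (\<forall>A\<in>sets M.
     emeasure M (symdiff A (T -` A \<inter> space M)) = 0 \<longrightarrow>
     emeasure M A = 0 \<or> emeasure M (space M - A) = 0)"

definition jointly_ergodic_wrt :: "'x measure \<Rightarrow> ('x \<Rightarrow> 'x) set \<Rightarrow> bool" where
  "jointly_ergodic_wrt M Fs \<longleftrightarrow> (\<forall>A\<in>sets M.
     (\<forall>T\<in>Fs. emeasure M (symdiff A (T -` A \<inter> space M)) = 0) \<longrightarrow>
     emeasure M A = 0 \<or> emeasure M (space M - A) = 0)"

end

theory Submission
  imports Defs
begin

text \<open>A bounded operator \<open>A\<close> commuting with every \<open>T\<^sub>\<lambda>\<close> and \<open>T\<^sub>\<lambda>\<^sup>*\<close> commutes with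
  \<open>T\<^sub>\<lambda> T\<^sub>\<lambda>\<^sup>*\<close>, which is multiplication by the indicator of the cylinder \<open>Z(\<lambda>)\<close>.
  The sets whose indicator multiplication commutes with \<open>A\<close> form a \<sigma>-algebra, and the
  cylinders generate everything, so \<open>A\<close> commutes with all indicator multiplications and is
  therefore multiplication by the bounded function \<open>h = A w / w\<close>, for any square-integrable \<open>w\<close>
  without zeros (which exists by \<sigma>-finiteness).  Commuting with \<open>T\<^sub>\<lambda>\<close> then forces
  \<open>h \<circ> \<sigma>\<^bsup>d(\<lambda>)\<^esup> = h\<close> on \<open>Z(\<lambda>)\<close>, and the cylinders of degree \<open>n\<close> cover the path space up
  to a null set, so \<open>h\<close> is \<open>\<sigma>\<^sup>n\<close>-invariant.  Under (joint) ergodicity every level set of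
  \<open>Re h\<close> and \<open>Im h\<close> is trivial, hence \<open>h\<close> is a.e. constant and \<open>A\<close> is a scalar.\<close>

section \<open>Square-integrable functions\<close>

definition l2_sqnorm :: "'x measure \<Rightarrow> ('x \<Rightarrow> complex) \<Rightarrow> real" where
  "l2_sqnorm N g = (LINT x|N. (cmod (g x))\<^sup>2)"

lemma norm_add_sq_le:
  fixes a b :: "'a::real_normed_vector"
  shows "(norm (a + b))\<^sup>2 \<le> 2 * (norm a)\<^sup>2 + 2 * (norm b)\<^sup>2"
proof -
  have "(norm (a + b))\<^sup>2 \<le> (norm a + norm b)\<^sup>2"
    by (simp add: norm_triangle_ineq power_mono)
  also have "\<dots> \<le> 2 * (norm a)\<^sup>2 + 2 * (norm b)\<^sup>2"
    using sum_squares_bound[of "norm a" "norm b"] by (simp add: power2_sum)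
  finally show ?thesis .
qed

lemma norm_diff_sq_le:
  fixes a b :: "'a::real_normed_vector"
  shows "(norm (a - b))\<^sup>2 \<le> 2 * (norm a)\<^sup>2 + 2 * (norm b)\<^sup>2"
  using norm_add_sq_le[of a "- b"] by simp

lemma borel_measurable_cnj[measurable (raw)]:
  "f \<in> borel_measurable M \<Longrightarrow> (\<lambda>x. cnj (f x)) \<in> borel_measurable M"
  by (rule borel_measurable_continuous_on[where f=cnj]) (auto intro: continuous_intros)

lemma L2D:
  assumes "g \<in> L2 N"
  shows "g \<in> borel_measurable N" "integrable N (\<lambda>x. (cmod (g x))\<^sup>2)"
  using assms by (auto simp: L2_def)

lemma L2_dominated:
  assumes h: "h \<in> L2 N" and g: "g \<in> borel_measurable N"
    and le: "AE x in N. cmod (g x) \<le> K * cmod (h x)"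
  shows "g \<in> L2 N"
proof -
  have "integrable N (\<lambda>x. (cmod (g x))\<^sup>2)"
  proof (rule Bochner_Integration.integrable_bound)
    show "integrable N (\<lambda>x. K\<^sup>2 * (cmod (h x))\<^sup>2)"
      using L2D[OF h] by simp
    show "(\<lambda>x. (cmod (g x))\<^sup>2) \<in> borel_measurable N"
      using g by measurable
    show "AE x in N. norm ((cmod (g x))\<^sup>2) \<le> norm (K\<^sup>2 * (cmod (h x))\<^sup>2)"
      using le
    proof eventually_elim
      case (elim x)
      then have "(cmod (g x))\<^sup>2 \<le> (K * cmod (h x))\<^sup>2"
        by (intro power_mono) auto
      then show ?case
        by (simp add: power_mult_distrib)
    qed
  qed
  then show ?thesis
    using g by (simp add: L2_def)
qed

lemma L2_AE_cong:
  assumes "g \<in> L2 N" "f \<in> borel_measurable N" "AE x in N. f x = g x"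
  shows "f \<in> L2 N"
  using assms(3) by (intro L2_dominated[OF assms(1,2), where K=1]) (auto elim: eventually_mono)

lemma L2_mult_bounded:
  assumes "g \<in> L2 N" "\<phi> \<in> borel_measurable N" "AE x in N. cmod (\<phi> x) \<le> K"
  shows "(\<lambda>x. \<phi> x * g x) \<in> L2 N"
proof (rule L2_dominated[OF assms(1), where K=K])
  show "(\<lambda>x. \<phi> x * g x) \<in> borel_measurable N"
    using L2D(1)[OF assms(1)] assms(2) by measurable
  show "AE x in N. cmod (\<phi> x * g x) \<le> K * cmod (g x)"
    using assms(3) by eventually_elim (simp add: norm_mult mult_right_mono)
qed

lemma L2_cmult: "g \<in> L2 N \<Longrightarrow> (\<lambda>x. c * g x) \<in> L2 N"
  using L2_mult_bounded[of g N "\<lambda>_. c" "cmod c"] by auto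

lemma L2_indicator_mult: "S \<in> sets N \<Longrightarrow> g \<in> L2 N \<Longrightarrow> (\<lambda>x. indicator S x * g x) \<in> L2 N"
  by (rule L2_mult_bounded[where K=1]) (auto simp: indicator_def)

lemma L2_zero: "(\<lambda>x. 0) \<in> L2 N"
  by (simp add: L2_def)

lemma L2_add:
  assumes g: "g \<in> L2 N" and h: "h \<in> L2 N"
  shows "(\<lambda>x. g x + h x) \<in> L2 N"
proof -
  have m: "(\<lambda>x. g x + h x) \<in> borel_measurable N"
    using L2D(1)[OF g] L2D(1)[OF h] by measurable
  have "integrable N (\<lambda>x. (cmod (g x + h x))\<^sup>2)"
  proof (rule Bochner_Integration.integrable_bound)
    show "integrable N (\<lambda>x. 2 * (cmod (g x))\<^sup>2 + 2 * (cmod (h x))\<^sup>2)"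
      using L2D(2)[OF g] L2D(2)[OF h] by simp
    show "(\<lambda>x. (cmod (g x + h x))\<^sup>2) \<in> borel_measurable N"
      using m by measurable
    show "AE x in N. norm ((cmod (g x + h x))\<^sup>2) \<le> norm (2 * (cmod (g x))\<^sup>2 + 2 * (cmod (h x))\<^sup>2)"
      using norm_add_sq_le[of "g _" "h _"] by (intro AE_I2) simp
  qed
  then show ?thesis
    using m by (simp add: L2_def)
qed

lemma L2_diff: "g \<in> L2 N \<Longrightarrow> h \<in> L2 N \<Longrightarrow> (\<lambda>x. g x - h x) \<in> L2 N"
  using L2_add[OF _ L2_cmult[of h N "-1"], of g] by simp

lemma L2_sum: "finite C \<Longrightarrow> (\<And>c. c \<in> C \<Longrightarrow> \<phi> c \<in> L2 N) \<Longrightarrow> (\<lambda>x. \<Sum>c\<in>C. \<phi> c x) \<in> L2 N"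
  by (induction C rule: finite_induct) (auto simp: L2_zero intro: L2_add)

lemma integrable_mult_cnj_L2:
  assumes g: "g \<in> L2 N" and h: "h \<in> L2 N"
  shows "integrable N (\<lambda>x. g x * cnj (h x))"
proof (rule Bochner_Integration.integrable_bound)
  show "integrable N (\<lambda>x. (cmod (g x))\<^sup>2 + (cmod (h x))\<^sup>2)"
    using L2D(2)[OF g] L2D(2)[OF h] by simp
  show "(\<lambda>x. g x * cnj (h x)) \<in> borel_measurable N"
    using L2D(1)[OF g] L2D(1)[OF h] by measurable
  show "AE x in N. norm (g x * cnj (h x)) \<le> norm ((cmod (g x))\<^sup>2 + (cmod (h x))\<^sup>2)"
  proof (intro AE_I2)
    fix x
    have "cmod (g x) * cmod (h x) \<le> (cmod (g x))\<^sup>2 + (cmod (h x))\<^sup>2"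
      using sum_squares_bound[of "cmod (g x)" "cmod (h x)"]
        mult_nonneg_nonneg[OF norm_ge_zero norm_ge_zero, of "g x" "h x"] by linarith
    then show "norm (g x * cnj (h x)) \<le> norm ((cmod (g x))\<^sup>2 + (cmod (h x))\<^sup>2)"
      by (simp add: norm_mult)
  qed
qed

lemma l2_sqnorm_nonneg: "0 \<le> l2_sqnorm N g"
  by (simp add: l2_sqnorm_def)

lemma l2_norm_eq_sqrt_sqnorm: "l2_norm N g = sqrt (l2_sqnorm N g)"
  by (simp add: l2_norm_def l2_sqnorm_def)

lemma l2_inner_self: "l2_inner N g g = complex_of_real (l2_sqnorm N g)"
proof -
  have "l2_inner N g g = (LINT x|N. complex_of_real ((cmod (g x))\<^sup>2))"
    unfolding l2_inner_def by (intro Bochner_Integration.integral_cong refl) (metis complex_norm_square)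
  also have "\<dots> = complex_of_real (l2_sqnorm N g)"
    unfolding l2_sqnorm_def by (rule integral_complex_of_real)
  finally show ?thesis .
qed

lemma l2_inner_diff_left:
  assumes "a \<in> L2 N" "b \<in> L2 N" "v \<in> L2 N"
  shows "l2_inner N (\<lambda>x. a x - b x) v = l2_inner N a v - l2_inner N b v"
  unfolding l2_inner_def using integrable_mult_cnj_L2[OF assms(1,3)] integrable_mult_cnj_L2[OF assms(2,3)]
  by (simp add: left_diff_distrib)

lemma AE_zero_if_l2_sqnorm_le_0:
  assumes g: "g \<in> L2 N" and le: "l2_sqnorm N g \<le> 0"
  shows "AE x in N. g x = 0"
proof -
  have "l2_sqnorm N g = 0"
    using le l2_sqnorm_nonneg[of N g] by simp
  then have "AE x in N. (cmod (g x))\<^sup>2 = 0"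
    using integral_nonneg_eq_0_iff_AE[OF L2D(2)[OF g]] by (simp add: l2_sqnorm_def)
  then show ?thesis
    by eventually_elim simp
qed

lemma l2_sqnorm_AE_cong:
  "AE x in N. g x = h x \<Longrightarrow> g \<in> L2 N \<Longrightarrow> h \<in> L2 N \<Longrightarrow> l2_sqnorm N g = l2_sqnorm N h"
  unfolding l2_sqnorm_def by (intro integral_cong_AE) (auto dest: L2D)

lemma l2_sqnorm_diff_le:
  assumes g: "g \<in> L2 N" and h: "h \<in> L2 N"
  shows "l2_sqnorm N (\<lambda>x. g x - h x) \<le> 2 * l2_sqnorm N g + 2 * l2_sqnorm N h"
proof -
  have "l2_sqnorm N (\<lambda>x. g x - h x) \<le> (LINT x|N. 2 * (cmod (g x))\<^sup>2 + 2 * (cmod (h x))\<^sup>2)"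
    unfolding l2_sqnorm_def
    using L2D(2)[OF L2_diff[OF g h]] L2D(2)[OF g] L2D(2)[OF h]
    by (intro integral_mono) (simp_all add: norm_diff_sq_le)
  also have "\<dots> = 2 * l2_sqnorm N g + 2 * l2_sqnorm N h"
    unfolding l2_sqnorm_def using L2D(2)[OF g] L2D(2)[OF h] by simp
  finally show ?thesis .
qed

lemma l2_sqnorm_mult_bounded_le:
  assumes g: "g \<in> L2 N" and m: "\<phi> \<in> borel_measurable N" and b: "AE x in N. cmod (\<phi> x) \<le> K"
  shows "l2_sqnorm N (\<lambda>x. \<phi> x * g x) \<le> K\<^sup>2 * l2_sqnorm N g"
proof -
  have "l2_sqnorm N (\<lambda>x. \<phi> x * g x) \<le> (LINT x|N. K\<^sup>2 * (cmod (g x))\<^sup>2)"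
    unfolding l2_sqnorm_def
  proof (rule integral_mono_AE)
    show "integrable N (\<lambda>x. (cmod (\<phi> x * g x))\<^sup>2)"
      using L2_mult_bounded[OF g m b] by (rule L2D)
    show "integrable N (\<lambda>x. K\<^sup>2 * (cmod (g x))\<^sup>2)"
      using L2D(2)[OF g] by simp
    show "AE x in N. (cmod (\<phi> x * g x))\<^sup>2 \<le> K\<^sup>2 * (cmod (g x))\<^sup>2"
      using b
    proof eventually_elim
      case (elim x)
      then have "cmod (\<phi> x) * cmod (g x) \<le> K * cmod (g x)"
        by (intro mult_right_mono) auto
      then have "(cmod (\<phi> x) * cmod (g x))\<^sup>2 \<le> (K * cmod (g x))\<^sup>2"
        by (intro power_mono) auto
      then show ?case
        by (simp add: norm_mult power_mult_distrib)
    qed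
  qed
  then show ?thesis
    by (simp add: l2_sqnorm_def)
qed

lemma l2_sqnorm_tendsto_0:
  assumes g: "g \<in> L2 N" and v: "\<And>i. v i \<in> borel_measurable N"
    and le: "\<And>i x. x \<in> space N \<Longrightarrow> cmod (v i x) \<le> B * cmod (g x)"
    and lim: "\<And>x. x \<in> space N \<Longrightarrow> (\<lambda>i. v i x) \<longlonglongrightarrow> 0"
  shows "(\<lambda>i. l2_sqnorm N (v i)) \<longlonglongrightarrow> 0"
proof -
  have "(\<lambda>i. LINT x|N. (cmod (v i x))\<^sup>2) \<longlonglongrightarrow> (LINT x|N. 0)"
  proof (rule integral_dominated_convergence[where w="\<lambda>x. B\<^sup>2 * (cmod (g x))\<^sup>2"])
    show "(\<lambda>x. 0::real) \<in> borel_measurable N" "\<And>i. (\<lambda>x. (cmod (v i x))\<^sup>2) \<in> borel_measurable N"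
      using v by measurable
    show "integrable N (\<lambda>x. B\<^sup>2 * (cmod (g x))\<^sup>2)"
      using L2D(2)[OF g] by simp
    show "AE x in N. (\<lambda>i. (cmod (v i x))\<^sup>2) \<longlonglongrightarrow> 0"
      using tendsto_power[OF tendsto_norm[OF lim], of _ 2] by (intro AE_I2) simp
    show "AE x in N. norm ((cmod (v i x))\<^sup>2) \<le> B\<^sup>2 * (cmod (g x))\<^sup>2" for i
    proof (intro AE_I2)
      fix x assume "x \<in> space N"
      then have "(cmod (v i x))\<^sup>2 \<le> (B * cmod (g x))\<^sup>2"
        using le by (intro power_mono) auto
      then show "norm ((cmod (v i x))\<^sup>2) \<le> B\<^sup>2 * (cmod (g x))\<^sup>2"
        by (simp add: power_mult_distrib)
    qed
  qed
  then show ?thesis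
    by (simp add: l2_sqnorm_def)
qed

section \<open>Bounded operators\<close>

lemma bounded_op_L2: "bounded_op N A \<Longrightarrow> g \<in> L2 N \<Longrightarrow> A g \<in> L2 N"
  by (simp add: bounded_op_def)

lemma bounded_op_AE_cong:
  "bounded_op N A \<Longrightarrow> g \<in> L2 N \<Longrightarrow> h \<in> L2 N \<Longrightarrow> AE x in N. g x = h x
    \<Longrightarrow> AE x in N. A g x = A h x"
  by (simp add: bounded_op_def)

lemma bounded_op_add:
  "bounded_op N A \<Longrightarrow> g \<in> L2 N \<Longrightarrow> h \<in> L2 N
    \<Longrightarrow> AE x in N. A (\<lambda>y. g y + h y) x = A g x + A h x"
  by (simp add: bounded_op_def)

lemma bounded_op_cmult:
  "bounded_op N A \<Longrightarrow> g \<in> L2 N \<Longrightarrow> AE x in N. A (\<lambda>y. c * g y) x = c * A g x"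
  by (simp add: bounded_op_def)

lemma bounded_op_zero: "bounded_op N A \<Longrightarrow> AE x in N. A (\<lambda>y. 0) x = 0"
  using bounded_op_cmult[OF _ L2_zero, of N A 0] by simp

lemma bounded_op_diff:
  assumes A: "bounded_op N A" and g: "g \<in> L2 N" and h: "h \<in> L2 N"
  shows "AE x in N. A (\<lambda>y. g y - h y) x = A g x - A h x"
proof -
  have "AE x in N. A (\<lambda>y. g y + (\<lambda>y. - 1 * h y) y) x = A g x + A (\<lambda>y. - 1 * h y) x"
    by (rule bounded_op_add[OF A g L2_cmult[OF h]])
  moreover have "AE x in N. A (\<lambda>y. - 1 * h y) x = - 1 * A h x"
    by (rule bounded_op_cmult[OF A h])
  ultimately show ?thesis
    by eventually_elim simp
qed

lemma bounded_op_sum: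
  assumes A: "bounded_op N A" and "finite C" and "\<And>c. c \<in> C \<Longrightarrow> \<phi> c \<in> L2 N"
  shows "AE x in N. A (\<lambda>y. \<Sum>c\<in>C. \<phi> c y) x = (\<Sum>c\<in>C. A (\<phi> c) x)"
  using assms(2,3)
proof (induction C rule: finite_induct)
  case empty
  then show ?case
    using bounded_op_zero[OF A] by simp
next
  case (insert a C)
  have "AE x in N. A (\<lambda>y. \<phi> a y + (\<Sum>c\<in>C. \<phi> c y)) x = A (\<phi> a) x + A (\<lambda>y. \<Sum>c\<in>C. \<phi> c y) x"
    using insert.hyps insert.prems by (intro bounded_op_add[OF A] L2_sum) auto
  with insert show ?case
    by (auto elim: eventually_elim2)
qed

lemma bounded_op_sqnorm_le:
  assumes "bounded_op N A"
  obtains C where "C \<ge> 0" "\<And>g. g \<in> L2 N \<Longrightarrow> l2_sqnorm N (A g) \<le> C * l2_sqnorm N g"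
proof -
  obtain c where c: "\<And>g. g \<in> L2 N \<Longrightarrow> sqrt (l2_sqnorm N (A g)) \<le> c * sqrt (l2_sqnorm N g)"
    using assms unfolding bounded_op_def l2_norm_eq_sqrt_sqnorm by blast
  have "l2_sqnorm N (A g) \<le> c\<^sup>2 * l2_sqnorm N g" if g: "g \<in> L2 N" for g
  proof -
    have "sqrt (l2_sqnorm N (A g)) \<le> \<bar>c\<bar> * sqrt (l2_sqnorm N g)"
      using c[OF g] mult_right_mono[OF abs_ge_self real_sqrt_ge_zero[OF l2_sqnorm_nonneg]]
      by (rule order_trans)
    then have "(sqrt (l2_sqnorm N (A g)))\<^sup>2 \<le> (\<bar>c\<bar> * sqrt (l2_sqnorm N g))\<^sup>2"
      by (intro power_mono) (simp_all add: l2_sqnorm_nonneg)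
    then show ?thesis
      by (simp add: power_mult_distrib l2_sqnorm_nonneg)
  qed
  then show ?thesis
    using that[of "c\<^sup>2"] by simp
qed

text \<open>An operator possessing an adjoint is well defined on L^2 classes: if \<open>u = u'\<close> a.e.
  then \<open>\<langle>T u - T u', v\<rangle> = \<langle>u - u', T\<^sup>* v\<rangle> = 0\<close> for \<open>v = T u - T u'\<close>.\<close>

lemma is_adjoint_AE_cong:
  assumes adj: "is_adjoint N T B" and T: "\<And>g. g \<in> L2 N \<Longrightarrow> T g \<in> L2 N"
    and u: "u \<in> L2 N" and u': "u' \<in> L2 N" and eq: "AE x in N. u x = u' x"
  shows "AE x in N. T u x = T u' x"
proof -
  define v where "v = (\<lambda>x. T u x - T u' x)"
  have v: "v \<in> L2 N"
    unfolding v_def using T u u' by (intro L2_diff)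
  have Bv: "B v \<in> L2 N"
    using adj v by (auto simp: is_adjoint_def)
  have "l2_inner N (T u) v = l2_inner N u (B v)"
    using adj u v by (auto simp: is_adjoint_def)
  also have "\<dots> = l2_inner N u' (B v)"
    unfolding l2_inner_def using eq L2D(1)[OF u] L2D(1)[OF u'] L2D(1)[OF Bv]
    by (intro integral_cong_AE) (auto elim: eventually_mono)
  also have "\<dots> = l2_inner N (T u') v"
    using adj u' v by (auto simp: is_adjoint_def)
  finally have "l2_sqnorm N v = 0"
    using l2_inner_self[of N v] l2_inner_diff_left[OF T[OF u] T[OF u'] v] by (simp add: v_def)
  then have "AE x in N. v x = 0"
    using AE_zero_if_l2_sqnorm_le_0[OF v] by simp
  then show ?thesis
    by eventually_elim (simp add: v_def)
qed

section \<open>Operators commuting with indicator multiplications\<close>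

definition commutes_indicator ::
    "'x measure \<Rightarrow> (('x \<Rightarrow> complex) \<Rightarrow> ('x \<Rightarrow> complex)) \<Rightarrow> 'x set \<Rightarrow> bool" where
  "commutes_indicator N A S \<longleftrightarrow>
     (\<forall>g\<in>L2 N. AE x in N. A (\<lambda>y. indicator S y * g y) x = indicator S x * A g x)"

lemma commutes_indicatorD:
  "commutes_indicator N A S \<Longrightarrow> g \<in> L2 N
    \<Longrightarrow> AE x in N. A (\<lambda>y. indicator S y * g y) x = indicator S x * A g x"
  by (simp add: commutes_indicator_def)

lemma commutes_indicator_empty: "bounded_op N A \<Longrightarrow> commutes_indicator N A {}"
  using bounded_op_zero[of N A] by (simp add: commutes_indicator_def)

lemma commutes_indicator_compl:
  assumes A: "bounded_op N A" and S: "S \<in> sets N" and comm: "commutes_indicator N A S"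
  shows "commutes_indicator N A (space N - S)"
  unfolding commutes_indicator_def
proof
  fix g assume g: "g \<in> L2 N"
  have "AE x in N. A (\<lambda>y. indicator (space N - S) y * g y) x = A (\<lambda>y. g y - indicator S y * g y) x"
    using g S by (intro bounded_op_AE_cong[OF A] L2_diff L2_indicator_mult AE_I2)
      (auto simp: indicator_def)
  moreover have "AE x in N. A (\<lambda>y. g y - indicator S y * g y) x = A g x - A (\<lambda>y. indicator S y * g y) x"
    using g S by (intro bounded_op_diff[OF A] L2_indicator_mult)
  moreover note commutes_indicatorD[OF comm g]
  moreover have "AE x in N. x \<in> space N"
    by simp
  ultimately show "AE x in N. A (\<lambda>y. indicator (space N - S) y * g y) x
      = indicator (space N - S) x * A g x"
    by eventually_elim (auto simp: indicator_def)
qed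

lemma commutes_indicator_Int:
  assumes A: "bounded_op N A" and T: "T \<in> sets N"
    and comm: "commutes_indicator N A S" "commutes_indicator N A T"
  shows "commutes_indicator N A (S \<inter> T)"
  unfolding commutes_indicator_def
proof
  fix g assume g: "g \<in> L2 N"
  have "(\<lambda>y. indicator (S \<inter> T) y * g y) = (\<lambda>y. indicator S y * (indicator T y * g y))"
    by (auto simp: indicator_def)
  with commutes_indicatorD[OF comm(1) L2_indicator_mult[OF T g]] commutes_indicatorD[OF comm(2) g]
  show "AE x in N. A (\<lambda>y. indicator (S \<inter> T) y * g y) x = indicator (S \<inter> T) x * A g x"
    by (auto elim!: eventually_elim2 simp: indicator_def)
qed

lemma commutes_indicator_Un:
  assumes A: "bounded_op N A" and sets: "S \<in> sets N" "T \<in> sets N"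
    and comm: "commutes_indicator N A S" "commutes_indicator N A T"
  shows "commutes_indicator N A (S \<union> T)"
proof -
  have "S \<union> T = space N - ((space N - S) \<inter> (space N - T))"
    using sets sets.sets_into_space by auto
  moreover have "commutes_indicator N A (space N - ((space N - S) \<inter> (space N - T)))"
    using sets comm by (intro commutes_indicator_compl commutes_indicator_Int A) auto
  ultimately show ?thesis
    by simp
qed

lemma l2_sqnorm_indicator_diff_tendsto_0:
  assumes u: "u \<in> L2 N" and S: "\<And>i. S i \<in> sets N" and inc: "incseq S"
  shows "(\<lambda>i. l2_sqnorm N (\<lambda>x. indicator ((\<Union>j. S j) - S i) x * u x)) \<longlonglongrightarrow> 0"
proof (rule l2_sqnorm_tendsto_0[OF u, where B=1])
  show "(\<lambda>x. indicator ((\<Union>j. S j) - S i) x * u x) \<in> borel_measurable N" for i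
    using S L2D(1)[OF u] by measurable
  show "cmod (indicator ((\<Union>j. S j) - S i) x * u x) \<le> 1 * cmod (u x)" for i x
    by (simp add: indicator_def)
  show "(\<lambda>i. indicator ((\<Union>j. S j) - S i) x * u x) \<longlonglongrightarrow> 0" for x
  proof (cases "x \<in> (\<Union>j. S j)")
    case True
    then obtain i0 where "x \<in> S i0"
      by auto
    then have "indicator ((\<Union>j. S j) - S i) x * u x = 0" if "i0 \<le> i" for i
      using inc that by (auto simp: incseq_def indicator_def)
    then have "\<forall>\<^sub>F i in sequentially. indicator ((\<Union>j. S j) - S i) x * u x = 0"
      unfolding eventually_sequentially by blast
    then show ?thesis
      by (rule tendsto_eventually)
  qed (simp add: indicator_def)
qed

lemma commutes_indicator_defect_le:
  assumes A: "bounded_op N A" and C: "\<And>g. g \<in> L2 N \<Longrightarrow> l2_sqnorm N (A g) \<le> C * l2_sqnorm N g"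
    and S: "S \<in> sets N" and U: "U \<in> sets N" and "S \<subseteq> U" and comm: "commutes_indicator N A S"
    and g: "g \<in> L2 N"
  shows "l2_sqnorm N (\<lambda>x. A (\<lambda>y. indicator U y * g y) x - indicator U x * A g x)
    \<le> 2 * C * l2_sqnorm N (\<lambda>x. indicator (U - S) x * g x)
      + 2 * l2_sqnorm N (\<lambda>x. indicator (U - S) x * A g x)"
proof -
  have Ag: "A g \<in> L2 N"
    by (rule bounded_op_L2[OF A g])
  have g1: "(\<lambda>y. indicator S y * g y) \<in> L2 N" and g2: "(\<lambda>y. indicator (U - S) y * g y) \<in> L2 N"
    using S U g by (auto intro: L2_indicator_mult)
  have "AE x in N. A (\<lambda>y. indicator U y * g y) x
      = A (\<lambda>y. indicator S y * g y + indicator (U - S) y * g y) x"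
    using \<open>S \<subseteq> U\<close>
    by (intro bounded_op_AE_cong[OF A] L2_indicator_mult[OF U g] L2_add[OF g1 g2] AE_I2)
      (auto simp: indicator_def)
  with bounded_op_add[OF A g1 g2] commutes_indicatorD[OF comm g]
  have "AE x in N. A (\<lambda>y. indicator U y * g y) x - indicator U x * A g x
      = A (\<lambda>y. indicator (U - S) y * g y) x - indicator (U - S) x * A g x"
    by eventually_elim (use \<open>S \<subseteq> U\<close> in \<open>auto simp: indicator_def\<close>)
  then have "l2_sqnorm N (\<lambda>x. A (\<lambda>y. indicator U y * g y) x - indicator U x * A g x)
      = l2_sqnorm N (\<lambda>x. A (\<lambda>y. indicator (U - S) y * g y) x - indicator (U - S) x * A g x)"
    using U S Ag
    by (intro l2_sqnorm_AE_cong L2_diff bounded_op_L2[OF A] L2_indicator_mult g g2) auto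
  also have "\<dots> \<le> 2 * l2_sqnorm N (A (\<lambda>y. indicator (U - S) y * g y))
      + 2 * l2_sqnorm N (\<lambda>x. indicator (U - S) x * A g x)"
    using U S by (intro l2_sqnorm_diff_le bounded_op_L2[OF A g2] L2_indicator_mult[OF _ Ag]) auto
  also have "\<dots> \<le> 2 * C * l2_sqnorm N (\<lambda>x. indicator (U - S) x * g x)
      + 2 * l2_sqnorm N (\<lambda>x. indicator (U - S) x * A g x)"
    using C[OF g2] by simp
  finally show ?thesis .
qed

lemma commutes_indicator_incseq_UN:
  assumes A: "bounded_op N A" and S: "\<And>i. S i \<in> sets N" and inc: "incseq S"
    and comm: "\<And>i. commutes_indicator N A (S i)"
  shows "commutes_indicator N A (\<Union>i. S i)"
  unfolding commutes_indicator_def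
proof
  fix g assume g: "g \<in> L2 N"
  define U where "U = (\<Union>i. S i)"
  have U: "U \<in> sets N"
    using S unfolding U_def by auto
  obtain C where C: "\<And>g. g \<in> L2 N \<Longrightarrow> l2_sqnorm N (A g) \<le> C * l2_sqnorm N g"
    using bounded_op_sqnorm_le[OF A] by blast
  define d where "d = (\<lambda>x. A (\<lambda>y. indicator U y * g y) x - indicator U x * A g x)"
  have d: "d \<in> L2 N"
    unfolding d_def using U g by (intro L2_diff bounded_op_L2[OF A] L2_indicator_mult)
  let ?bound = "\<lambda>i. 2 * C * l2_sqnorm N (\<lambda>x. indicator (U - S i) x * g x)
    + 2 * l2_sqnorm N (\<lambda>x. indicator (U - S i) x * A g x)"
  have "?bound \<longlonglongrightarrow> 2 * C * 0 + 2 * 0"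
    unfolding U_def using g bounded_op_L2[OF A g] S inc
    by (intro tendsto_intros l2_sqnorm_indicator_diff_tendsto_0)
  moreover have "l2_sqnorm N d \<le> ?bound i" for i
    unfolding d_def by (rule commutes_indicator_defect_le[OF A C S U _ comm g]) (auto simp: U_def)
  ultimately have "l2_sqnorm N d \<le> 0"
    by (intro LIMSEQ_le_const) auto
  then have "AE x in N. d x = 0"
    by (rule AE_zero_if_l2_sqnorm_le_0[OF d])
  then show "AE x in N. A (\<lambda>y. indicator (\<Union>i. S i) y * g y) x = indicator (\<Union>i. S i) x * A g x"
    unfolding d_def U_def by eventually_elim simp
qed

lemma commutes_indicator_UN:
  fixes S :: "nat \<Rightarrow> 'x set"
  assumes A: "bounded_op N A" and S: "\<And>i. S i \<in> sets N" and comm: "\<And>i. commutes_indicator N A (S i)"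
  shows "commutes_indicator N A (\<Union>i. S i)"
proof -
  have partial: "(\<Union>i\<le>n. S i) \<in> sets N \<and> commutes_indicator N A (\<Union>i\<le>n. S i)" for n
    by (induction n) (auto simp: atMost_Suc S comm intro: commutes_indicator_Un[OF A])
  have "(\<Union>n. \<Union>i\<le>n. S i) = (\<Union>i. S i)"
    by auto
  moreover have "incseq (\<lambda>n. \<Union>i\<le>n. S i)"
    by (intro monoI UN_mono) auto
  ultimately show ?thesis
    using commutes_indicator_incseq_UN[OF A, of "\<lambda>n. \<Union>i\<le>n. S i"] partial by auto
qed

lemma commutes_indicator_sigma_sets:
  assumes A: "bounded_op N A" and sets_N: "sets N = sigma_sets (space N) \<G>"
    and gen: "\<And>S. S \<in> \<G> \<Longrightarrow> commutes_indicator N A S" and S: "S \<in> sets N"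
  shows "commutes_indicator N A S"
proof -
  have "S \<in> sigma_sets (space N) \<G>"
    using S sets_N by simp
  then show ?thesis
  proof (induction rule: sigma_sets.induct)
    case (Compl a)
    then show ?case
      using sets_N by (intro commutes_indicator_compl[OF A]) auto
  next
    case (Union a)
    then show ?case
      using sets_N by (intro commutes_indicator_UN[OF A]) auto
  qed (auto intro: gen commutes_indicator_empty[OF A])
qed

section \<open>Multiplication operators\<close>

lemma l2_sqnorm_multiplier_defect_le:
  assumes A: "bounded_op N A" and C: "\<And>g. g \<in> L2 N \<Longrightarrow> l2_sqnorm N (A g) \<le> C * l2_sqnorm N g"
    and h: "h \<in> borel_measurable N" and hb: "AE x in N. cmod (h x) \<le> K"
    and g: "g \<in> L2 N" and u: "u \<in> L2 N" and Au: "AE x in N. A u x = h x * u x"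
  shows "l2_sqnorm N (\<lambda>x. A g x - h x * g x) \<le> (2 * C + 2 * K\<^sup>2) * l2_sqnorm N (\<lambda>x. g x - u x)"
proof -
  have gu: "(\<lambda>x. g x - u x) \<in> L2 N"
    using g u by (rule L2_diff)
  have hgu: "(\<lambda>x. h x * (g x - u x)) \<in> L2 N"
    by (rule L2_mult_bounded[OF gu h hb])
  have "AE x in N. A g x - h x * g x = A (\<lambda>y. g y - u y) x - h x * (g x - u x)"
    using bounded_op_diff[OF A g u] Au by eventually_elim (simp add: algebra_simps)
  then have "l2_sqnorm N (\<lambda>x. A g x - h x * g x)
      = l2_sqnorm N (\<lambda>x. A (\<lambda>y. g y - u y) x - h x * (g x - u x))"
    by (rule l2_sqnorm_AE_cong)
      (intro L2_diff bounded_op_L2[OF A] g gu hgu L2_mult_bounded[OF g h hb])+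
  also have "\<dots> \<le> 2 * l2_sqnorm N (A (\<lambda>y. g y - u y)) + 2 * l2_sqnorm N (\<lambda>x. h x * (g x - u x))"
    by (rule l2_sqnorm_diff_le[OF bounded_op_L2[OF A gu] hgu])
  also have "\<dots> \<le> (2 * C + 2 * K\<^sup>2) * l2_sqnorm N (\<lambda>x. g x - u x)"
    using C[OF gu] l2_sqnorm_mult_bounded_le[OF gu h hb] by (simp add: algebra_simps)
  finally show ?thesis .
qed

lemma AE_zero_if_large_multiplier:
  assumes u: "u \<in> L2 N" and hu: "(\<lambda>x. h x * u x) \<in> L2 N"
    and le: "l2_sqnorm N (\<lambda>x. h x * u x) \<le> C * l2_sqnorm N u"
    and K: "0 \<le> K" "C < K\<^sup>2" and large: "\<And>x. u x \<noteq> 0 \<Longrightarrow> K \<le> cmod (h x)"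
  shows "AE x in N. u x = 0"
proof -
  have "K\<^sup>2 * l2_sqnorm N u = (LINT x|N. K\<^sup>2 * (cmod (u x))\<^sup>2)"
    by (simp add: l2_sqnorm_def)
  also have "\<dots> \<le> l2_sqnorm N (\<lambda>x. h x * u x)"
    unfolding l2_sqnorm_def
  proof (rule integral_mono)
    show "integrable N (\<lambda>x. K\<^sup>2 * (cmod (u x))\<^sup>2)"
      using L2D(2)[OF u] by simp
    show "integrable N (\<lambda>x. (cmod (h x * u x))\<^sup>2)"
      using L2D(2)[OF hu] .
    show "K\<^sup>2 * (cmod (u x))\<^sup>2 \<le> (cmod (h x * u x))\<^sup>2" for x
    proof (cases "u x = 0")
      case False
      then have "K * cmod (u x) \<le> cmod (h x) * cmod (u x)"
        using large by (intro mult_right_mono) auto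
      then have "(K * cmod (u x))\<^sup>2 \<le> (cmod (h x) * cmod (u x))\<^sup>2"
        using K(1) by (intro power_mono) auto
      then show ?thesis
        by (simp add: norm_mult power_mult_distrib)
    qed simp
  qed
  finally have "(K\<^sup>2 - C) * l2_sqnorm N u \<le> 0"
    using le by (simp add: algebra_simps)
  then show ?thesis
    using K(2) by (intro AE_zero_if_l2_sqnorm_le_0[OF u]) (simp add: mult_le_0_iff)
qed

lemma simple_function_mult_eq_sum:
  fixes \<psi> w :: "'a \<Rightarrow> complex"
  assumes "simple_function N \<psi>" "x \<in> space N"
  shows "\<psi> x * w x = (\<Sum>c\<in>\<psi> ` space N. indicator (\<psi> -` {c} \<inter> space N) x * (c * w x))"
proof -
  have "\<psi> x * w x = (\<Sum>c\<in>\<psi> ` space N. indicator (\<psi> -` {c} \<inter> space N) x *\<^sub>R c) * w x"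
    by (simp only: simple_function_indicator_representation_banach[OF assms, symmetric])
  also have "\<dots> = (\<Sum>c\<in>\<psi> ` space N. indicator (\<psi> -` {c} \<inter> space N) x * (c * w x))"
    unfolding sum_distrib_right by (simp add: scaleR_conv_of_real of_real_indicator mult.assoc)
  finally show ?thesis .
qed

lemma ex_simple_mult_approx:
  assumes g: "g \<in> L2 N" and w: "w \<in> borel_measurable N"
    and w_nonzero: "\<And>x. x \<in> space N \<Longrightarrow> w x \<noteq> 0"
  shows "\<exists>F. (\<forall>i. simple_function N (F i)) \<and> (\<forall>i. (\<lambda>x. F i x * w x) \<in> L2 N) \<and>
    (\<lambda>i. l2_sqnorm N (\<lambda>x. g x - F i x * w x)) \<longlonglongrightarrow> 0"
proof -
  have "(\<lambda>x. g x / w x) \<in> borel_measurable N"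
    using L2D(1)[OF g] w by measurable
  then obtain F where F: "\<And>i. simple_function N (F i)"
      "\<And>x. x \<in> space N \<Longrightarrow> (\<lambda>i. F i x) \<longlonglongrightarrow> g x / w x"
      "\<And>i x. x \<in> space N \<Longrightarrow> dist (F i x) 0 \<le> 2 * dist (g x / w x) 0"
    using borel_measurable_implies_sequence_metric[of _ N 0] by blast
  have le: "cmod (F i x * w x) \<le> 2 * cmod (g x)" if x: "x \<in> space N" for i x
  proof -
    have "cmod (F i x) * cmod (w x) \<le> 2 * cmod (g x / w x) * cmod (w x)"
      using F(3)[OF x, of i] by (intro mult_right_mono) simp_all
    also have "\<dots> = 2 * cmod (g x)"
      using w_nonzero[OF x] by (simp add: norm_divide)
    finally show ?thesis
      by (simp add: norm_mult)
  qed
  have meas: "(\<lambda>x. F i x * w x) \<in> borel_measurable N" for i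
    using borel_measurable_simple_function[OF F(1)] w by measurable
  have "(\<lambda>x. F i x * w x) \<in> L2 N" for i
    using le by (intro L2_dominated[OF g meas, where K=2] AE_I2)
  moreover have "(\<lambda>i. l2_sqnorm N (\<lambda>x. g x - F i x * w x)) \<longlonglongrightarrow> 0"
  proof (rule l2_sqnorm_tendsto_0[OF g, where B=3])
    show "(\<lambda>x. g x - F i x * w x) \<in> borel_measurable N" for i
      using L2D(1)[OF g] meas by measurable
    show "cmod (g x - F i x * w x) \<le> 3 * cmod (g x)" if "x \<in> space N" for i x
      using norm_triangle_ineq4[of "g x" "F i x * w x"] le[OF that, of i] by linarith
    show "(\<lambda>i. g x - F i x * w x) \<longlonglongrightarrow> 0" if x: "x \<in> space N" for x
    proof -
      have "(\<lambda>i. g x - F i x * w x) \<longlonglongrightarrow> g x - g x / w x * w x"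
        by (intro tendsto_diff tendsto_mult F(2)[OF x] tendsto_const)
      then show ?thesis
        using w_nonzero[OF x] by simp
    qed
  qed
  ultimately show ?thesis
    using F(1) by blast
qed

context
  fixes N :: "'x measure" and A :: "('x \<Rightarrow> complex) \<Rightarrow> 'x \<Rightarrow> complex" and w :: "'x \<Rightarrow> complex"
  assumes A: "bounded_op N A"
    and commutes: "\<And>S. S \<in> sets N \<Longrightarrow> commutes_indicator N A S"
    and w: "w \<in> L2 N" and w_nonzero: "\<And>x. x \<in> space N \<Longrightarrow> w x \<noteq> 0"
begin

lemma borel_measurable_multiplier: "(\<lambda>x. A w x / w x) \<in> borel_measurable N"
  using L2D(1)[OF w] L2D(1)[OF bounded_op_L2[OF A w]] by measurable

lemma AE_indicator_mult_weight:
  assumes S: "S \<in> sets N"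
  shows "AE x in N. A (\<lambda>y. indicator S y * (c * w y)) x = A w x / w x * (indicator S x * (c * w x))"
proof -
  have "AE x in N. x \<in> space N"
    by simp
  with commutes_indicatorD[OF commutes[OF S] L2_cmult[OF w, where c=c]] bounded_op_cmult[OF A w, where c=c]
  show ?thesis
    by eventually_elim (simp add: w_nonzero)
qed

lemma multiplier_AE_bounded:
  obtains K where "AE x in N. cmod (A w x / w x) \<le> K"
proof -
  define h where "h x = A w x / w x" for x
  obtain C where C: "C \<ge> 0" "\<And>g. g \<in> L2 N \<Longrightarrow> l2_sqnorm N (A g) \<le> C * l2_sqnorm N g"
    using bounded_op_sqnorm_le[OF A] by blast
  define K where "K = C + 1"
  have "K\<^sup>2 = C * C + 2 * C + 1"
    unfolding K_def by (simp add: power2_eq_square algebra_simps)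
  then have K: "0 \<le> K" "C < K\<^sup>2"
    using C(1) mult_nonneg_nonneg[OF C(1) C(1)] unfolding K_def by linarith+
  have h: "h \<in> borel_measurable N"
    unfolding h_def by (rule borel_measurable_multiplier)
  define S where "S = {x \<in> space N. K < cmod (h x)}"
  have S: "S \<in> sets N"
    unfolding S_def using h by measurable
  define u where "u = (\<lambda>y. indicator S y * w y)"
  have u: "u \<in> L2 N"
    unfolding u_def by (rule L2_indicator_mult[OF S w])
  have Au: "AE x in N. A u x = h x * u x"
    using AE_indicator_mult_weight[OF S, where c=1] unfolding u_def h_def by (simp only: mult_1)
  have hu: "(\<lambda>x. h x * u x) \<in> L2 N"
  proof (rule L2_AE_cong[OF bounded_op_L2[OF A u]])
    show "(\<lambda>x. h x * u x) \<in> borel_measurable N"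
      using h L2D(1)[OF u] by measurable
    show "AE x in N. h x * u x = A u x"
      using Au by (rule eventually_mono) simp
  qed
  have "l2_sqnorm N (\<lambda>x. h x * u x) = l2_sqnorm N (A u)"
    using Au by (intro l2_sqnorm_AE_cong hu bounded_op_L2[OF A u]) (auto elim: eventually_mono)
  also have "\<dots> \<le> C * l2_sqnorm N u"
    using C(2)[OF u] .
  finally have "AE x in N. u x = 0"
    using K by (rule AE_zero_if_large_multiplier[OF u hu]) (auto simp: u_def S_def indicator_def)
  moreover have "AE x in N. x \<in> space N"
    by simp
  ultimately have "AE x in N. cmod (h x) \<le> K"
  proof eventually_elim
    case (elim x)
    then show ?case
      using w_nonzero[of x] by (auto simp: u_def S_def indicator_def split: if_splits)
  qed
  then show ?thesis
    unfolding h_def by (rule that)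
qed

lemma AE_simple_mult_weight:
  assumes \<psi>: "simple_function N \<psi>"
  shows "AE x in N. A (\<lambda>y. \<psi> y * w y) x = A w x / w x * (\<psi> x * w x)"
proof -
  define h where "h x = A w x / w x" for x
  define V where "V = \<psi> ` space N"
  define level where "level c = \<psi> -` {c} \<inter> space N" for c
  define piece where "piece c = (\<lambda>y. indicator (level c) y * (c * w y))" for c
  have V: "finite V"
    unfolding V_def using simple_functionD(1)[OF \<psi>] .
  have level: "level c \<in> sets N" for c
    unfolding level_def using simple_functionD(2)[OF \<psi>] .
  have piece: "piece c \<in> L2 N" for c
    unfolding piece_def using L2_indicator_mult[OF level L2_cmult[OF w]] .
  have rep: "\<psi> x * w x = (\<Sum>c\<in>V. piece c x)" if "x \<in> space N" for x
    unfolding V_def level_def piece_def by (rule simple_function_mult_eq_sum[OF \<psi> that])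
  have sum_L2: "(\<lambda>y. \<Sum>c\<in>V. piece c y) \<in> L2 N"
    using V piece by (rule L2_sum)
  have \<psi>w: "(\<lambda>y. \<psi> y * w y) \<in> L2 N"
  proof (rule L2_AE_cong[OF sum_L2])
    show "(\<lambda>y. \<psi> y * w y) \<in> borel_measurable N"
      using borel_measurable_simple_function[OF \<psi>] L2D(1)[OF w] by measurable
    show "AE x in N. \<psi> x * w x = (\<Sum>c\<in>V. piece c x)"
      using rep by (rule AE_I2)
  qed
  have "AE x in N. A (\<lambda>y. \<psi> y * w y) x = A (\<lambda>y. \<Sum>c\<in>V. piece c y) x"
    using rep by (intro bounded_op_AE_cong[OF A \<psi>w sum_L2] AE_I2)
  moreover have "AE x in N. A (\<lambda>y. \<Sum>c\<in>V. piece c y) x = (\<Sum>c\<in>V. A (piece c) x)"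
    using A V piece by (rule bounded_op_sum)
  moreover have "AE x in N. \<forall>c\<in>V. A (piece c) x = h x * piece c x"
    using AE_indicator_mult_weight[OF level] unfolding piece_def h_def by (rule AE_finite_allI[OF V])
  moreover have "AE x in N. x \<in> space N"
    by simp
  ultimately show ?thesis
  proof eventually_elim
    case (elim x)
    have "A (\<lambda>y. \<psi> y * w y) x = (\<Sum>c\<in>V. A (piece c) x)"
      using elim(1,2) by simp
    also have "\<dots> = (\<Sum>c\<in>V. h x * piece c x)"
      using elim(3) by (intro sum.cong) auto
    also have "\<dots> = h x * (\<psi> x * w x)"
      by (simp only: rep[OF elim(4)] sum_distrib_left)
    finally show ?case
      unfolding h_def .
  qed
qed

lemma AE_eq_multiplier:
  assumes g: "g \<in> L2 N"
  shows "AE x in N. A g x = A w x / w x * g x"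
proof -
  define h where "h x = A w x / w x" for x
  have h: "h \<in> borel_measurable N"
    unfolding h_def by (rule borel_measurable_multiplier)
  obtain K where hb: "AE x in N. cmod (h x) \<le> K"
    unfolding h_def by (rule multiplier_AE_bounded)
  obtain C where C: "\<And>g. g \<in> L2 N \<Longrightarrow> l2_sqnorm N (A g) \<le> C * l2_sqnorm N g"
    using bounded_op_sqnorm_le[OF A] by blast
  obtain F where F: "\<And>i. simple_function N (F i)" "\<And>i. (\<lambda>x. F i x * w x) \<in> L2 N"
    and lim: "(\<lambda>i. l2_sqnorm N (\<lambda>x. g x - F i x * w x)) \<longlonglongrightarrow> 0"
    using ex_simple_mult_approx[OF g L2D(1)[OF w] w_nonzero] by blast
  have AF: "AE x in N. A (\<lambda>y. F i y * w y) x = h x * (F i x * w x)" for i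
    unfolding h_def by (rule AE_simple_mult_weight[OF F(1)])
  have "l2_sqnorm N (\<lambda>x. A g x - h x * g x)
      \<le> (2 * C + 2 * K\<^sup>2) * l2_sqnorm N (\<lambda>x. g x - F i x * w x)" for i
    by (rule l2_sqnorm_multiplier_defect_le[OF A C h hb g F(2) AF])
  moreover have "(\<lambda>i. (2 * C + 2 * K\<^sup>2) * l2_sqnorm N (\<lambda>x. g x - F i x * w x))
      \<longlonglongrightarrow> (2 * C + 2 * K\<^sup>2) * 0"
    by (intro tendsto_mult tendsto_const lim)
  ultimately have "l2_sqnorm N (\<lambda>x. A g x - h x * g x) \<le> 0"
    by (intro LIMSEQ_le_const) auto
  moreover have "(\<lambda>x. A g x - h x * g x) \<in> L2 N"
    by (intro L2_diff bounded_op_L2[OF A g] L2_mult_bounded[OF g h hb])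
  ultimately have "AE x in N. A g x - h x * g x = 0"
    by (intro AE_zero_if_l2_sqnorm_le_0)
  then show ?thesis
    by eventually_elim (simp add: h_def)
qed

lemma ex_bounded_multiplier:
  "\<exists>h. h \<in> borel_measurable N \<and> (\<exists>K. AE x in N. cmod (h x) \<le> K) \<and>
     (\<forall>g\<in>L2 N. AE x in N. A g x = h x * g x)"
proof -
  obtain K where "AE x in N. cmod (A w x / w x) \<le> K"
    by (rule multiplier_AE_bounded)
  then show ?thesis
    using borel_measurable_multiplier AE_eq_multiplier by blast
qed

end

section \<open>Invariant functions of ergodic transformations\<close>

lemma ergodic_imp_jointly_ergodic: "T \<in> Ts \<Longrightarrow> ergodic_wrt N T \<Longrightarrow> jointly_ergodic_wrt N Ts"
  unfolding ergodic_wrt_def jointly_ergodic_wrt_def by blast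

lemma emeasure_symdiff_invariant_level_set:
  assumes T: "T \<in> N \<rightarrow>\<^sub>M N" and inv: "AE x in N. h (T x) = h x"
    and A: "{x \<in> space N. P (h x)} \<in> sets N"
  shows "emeasure N (symdiff {x \<in> space N. P (h x)} (T -` {x \<in> space N. P (h x)} \<inter> space N)) = 0"
proof -
  let ?A = "{x \<in> space N. P (h x)}"
  have sets: "symdiff ?A (T -` ?A \<inter> space N) \<in> sets N"
    unfolding symdiff_def using A measurable_sets[OF T A] by auto
  have "AE x in N. x \<notin> symdiff ?A (T -` ?A \<inter> space N)"
    using inv by eventually_elim (use measurable_space[OF T] in \<open>auto simp: symdiff_def\<close>)
  then show ?thesis
    using AE_iff_null_sets[OF sets] by (simp add: null_sets_def sets)
qed

lemma eq_if_inverse_Suc_bounds: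
  fixes y c :: real
  assumes "\<And>m::nat. c - 1 / Suc m < y" and "\<And>m::nat. y \<le> c + 1 / Suc m"
  shows "y = c"
proof (rule ccontr)
  assume "y \<noteq> c"
  then obtain m where "inverse (real (Suc m)) < \<bar>y - c\<bar>"
    using reals_Archimedean[of "\<bar>y - c\<bar>"] by auto
  with assms(1)[of m] assms(2)[of m] show False
    unfolding inverse_eq_divide abs_less_iff by linarith
qed

text \<open>The constant is the supremum of the thresholds that \<open>u\<close> exceeds a.e.\<close>

lemma AE_eq_const_if_threshold_dichotomy:
  fixes u :: "'a \<Rightarrow> real"
  assumes bounded: "AE x in N. \<bar>u x\<bar> \<le> K"
    and dichotomy: "\<And>r. (AE x in N. u x \<le> r) \<or> (AE x in N. r < u x)"
  shows "\<exists>c. AE x in N. u x = c"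
proof (cases "AE x in N. False")
  case True
  then show ?thesis
    by (auto elim: eventually_mono)
next
  case nontrivial: False
  define S where "S = {r. AE x in N. r < u x}"
  have "- K - 1 \<in> S"
    unfolding S_def using bounded by (auto elim!: eventually_mono)
  have S_le: "r \<le> K" if "r \<in> S" for r
  proof (rule ccontr)
    assume "\<not> r \<le> K"
    have "AE x in N. r < u x"
      using that by (simp add: S_def)
    with bounded have "AE x in N. False"
      by eventually_elim (use \<open>\<not> r \<le> K\<close> in linarith)
    with nontrivial show False ..
  qed
  then have bdd: "bdd_above S"
    by (auto simp: bdd_above_def)
  define c where "c = Sup S"
  have "AE x in N. \<forall>m::nat. c - 1 / Suc m < u x"
  proof (rule AE_all_countable[THEN iffD2], rule allI)
    fix m :: nat
    obtain r where "r \<in> S" "c - 1 / Suc m < r"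
      using less_cSup_iff[OF _ bdd, of "c - 1 / Suc m"] \<open>- K - 1 \<in> S\<close> by (auto simp: c_def)
    then show "AE x in N. c - 1 / Suc m < u x"
      unfolding S_def by (auto elim: eventually_mono)
  qed
  moreover have "AE x in N. \<forall>m::nat. u x \<le> c + 1 / Suc m"
  proof (rule AE_all_countable[THEN iffD2], rule allI)
    fix m :: nat
    have "c + 1 / Suc m \<notin> S"
      using cSup_upper[OF _ bdd, of "c + 1 / Suc m"] by (auto simp: c_def)
    then show "AE x in N. u x \<le> c + 1 / Suc m"
      using dichotomy[of "c + 1 / Suc m"] unfolding S_def by auto
  qed
  ultimately have "AE x in N. u x = c"
    by eventually_elim (blast intro: eq_if_inverse_Suc_bounds)
  then show ?thesis ..
qed

lemma AE_eq_const_if_jointly_ergodic: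
  fixes h :: "'a \<Rightarrow> complex"
  assumes ergodic: "jointly_ergodic_wrt N Ts"
    and T: "\<And>T. T \<in> Ts \<Longrightarrow> T \<in> N \<rightarrow>\<^sub>M N" and inv: "\<And>T. T \<in> Ts \<Longrightarrow> AE x in N. h (T x) = h x"
    and h: "h \<in> borel_measurable N" and bounded: "AE x in N. cmod (h x) \<le> K"
  shows "\<exists>c. AE x in N. h x = c"
proof -
  have const: "\<exists>c. AE x in N. f (h x) = c"
    if f: "f \<in> borel_measurable borel" and f_le: "\<And>z. \<bar>f z\<bar> \<le> cmod z" for f :: "complex \<Rightarrow> real"
  proof (rule AE_eq_const_if_threshold_dichotomy)
    show "AE x in N. \<bar>f (h x)\<bar> \<le> K"
      using bounded by eventually_elim (rule order_trans[OF f_le])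
    fix r
    let ?A = "{x \<in> space N. r < f (h x)}"
    have A: "?A \<in> sets N" and A': "space N - ?A \<in> sets N"
      using h f by measurable
    have "emeasure N ?A = 0 \<or> emeasure N (space N - ?A) = 0"
      using ergodic A T inv emeasure_symdiff_invariant_level_set[of _ N h "\<lambda>z. r < f z"]
      unfolding jointly_ergodic_wrt_def by blast
    moreover have "(AE x in N. f (h x) \<le> r) \<longleftrightarrow> emeasure N ?A = 0"
      by (rule AE_iff_measurable[OF A]) auto
    moreover have "(AE x in N. r < f (h x)) \<longleftrightarrow> emeasure N (space N - ?A) = 0"
      by (rule AE_iff_measurable[OF A']) auto
    ultimately show "(AE x in N. f (h x) \<le> r) \<or> (AE x in N. r < f (h x))"
      by blast
  qed
  obtain a where a: "AE x in N. Re (h x) = a"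
    using const[of Re] abs_Re_le_cmod by auto
  obtain b where b: "AE x in N. Im (h x) = b"
    using const[of Im] abs_Im_le_cmod by auto
  from a b have "AE x in N. h x = Complex a b"
    by eventually_elim (simp add: complex_eq_iff)
  then show ?thesis ..
qed

section \<open>The restricted measure\<close>

lemma
  shows sets_restr_measure[simp, measurable_cong]: "sets (restr_measure M E) = sets M"
    and space_restr_measure[simp]: "space (restr_measure M E) = space M"
  by (simp_all add: restr_measure_def)

lemma measurable_restr_measure_eq1[simp]: "f \<in> restr_measure M E \<rightarrow>\<^sub>M M' \<longleftrightarrow> f \<in> M \<rightarrow>\<^sub>M M'"
  by (simp add: restr_measure_def)

lemma AE_restr_measure_iff:
  assumes "E \<in> sets M"
  shows "(AE x in restr_measure M E. P x) \<longleftrightarrow> (AE x in M. x \<in> E \<longrightarrow> P x)"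
proof -
  have "(AE x in restr_measure M E. P x) \<longleftrightarrow> (AE x in M. 0 < (indicator E x :: ennreal) \<longrightarrow> P x)"
    unfolding restr_measure_def using assms by (intro AE_density) simp
  also have "\<dots> \<longleftrightarrow> (AE x in M. x \<in> E \<longrightarrow> P x)"
    by (simp add: indicator_def)
  finally show ?thesis .
qed

lemma AE_restr_measure: "E \<in> sets M \<Longrightarrow> AE x in M. P x \<Longrightarrow> AE x in restr_measure M E. P x"
  by (auto simp: AE_restr_measure_iff elim: eventually_mono)

lemma integral_restr_measure:
  fixes \<phi> :: "'a \<Rightarrow> complex"
  assumes "E \<in> sets M" "\<phi> \<in> borel_measurable M"
  shows "(LINT x|restr_measure M E. \<phi> x) = (LINT x|M. indicator E x *\<^sub>R \<phi> x)"
proof -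
  have "(indicator E :: 'a \<Rightarrow> ennreal) = (\<lambda>x. ennreal (indicator E x))"
    by (auto simp: fun_eq_iff indicator_def)
  then show ?thesis
    unfolding restr_measure_def using assms by (simp add: integral_density)
qed

lemma L2_restr_measure_iff:
  assumes E: "E \<in> sets M"
  shows "g \<in> L2 (restr_measure M E) \<longleftrightarrow>
    g \<in> borel_measurable M \<and> (\<integral>\<^sup>+ x. ennreal (indicator E x * (cmod (g x))\<^sup>2) \<partial>M) < \<infinity>"
proof (cases "g \<in> borel_measurable M")
  case True
  then have "(\<lambda>x. (cmod (g x))\<^sup>2) \<in> borel_measurable M"
    by measurable
  moreover have "(\<integral>\<^sup>+ x. ennreal ((cmod (g x))\<^sup>2) \<partial>restr_measure M E)
      = (\<integral>\<^sup>+ x. ennreal (indicator E x * (cmod (g x))\<^sup>2) \<partial>M)"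
    unfolding restr_measure_def using E True
    by (subst nn_integral_density) (auto intro!: nn_integral_cong simp: indicator_def)
  ultimately show ?thesis
    unfolding L2_def by (simp add: integrable_iff_bounded)
qed (simp add: L2_def)

lemma sigma_finite_restr_measure:
  "sigma_finite_measure M \<Longrightarrow> E \<in> sets M \<Longrightarrow> sigma_finite_measure (restr_measure M E)"
  unfolding restr_measure_def
  by (subst sigma_finite_measure.sigma_finite_iff_density_finite) (auto simp: indicator_def)

lemma (in sigma_finite_measure) ex_L2_nonzero: "\<exists>w. w \<in> L2 M \<and> (\<forall>x\<in>space M. w x \<noteq> 0)"
proof -
  obtain q where q: "q \<in> borel_measurable M" "integral\<^sup>N M q \<noteq> \<infinity>"
    "\<And>x. x \<in> space M \<Longrightarrow> 0 < q x \<and> q x < \<infinity>"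
    using Ex_finite_integrable_function by blast
  define w where "w x = complex_of_real (sqrt (enn2real (q x)))" for x
  have "integrable M (\<lambda>x. enn2real (q x))"
  proof (rule integrableI_bounded)
    show "(\<lambda>x. enn2real (q x)) \<in> borel_measurable M"
      using q(1) by measurable
    have "(\<integral>\<^sup>+ x. ennreal (norm (enn2real (q x))) \<partial>M) = integral\<^sup>N M q"
      using q(3) by (intro nn_integral_cong) (simp add: ennreal_enn2real less_top)
    then show "(\<integral>\<^sup>+ x. ennreal (norm (enn2real (q x))) \<partial>M) < \<infinity>"
      using q(2) by (simp add: less_top)
  qed
  then have "w \<in> L2 M"
    unfolding L2_def w_def using q(1) by (simp add: norm_of_real)
  moreover have "w x \<noteq> 0" if "x \<in> space M" for x
    using q(3)[OF that] enn2real_positive_iff[of "q x"] by (simp add: w_def)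
  ultimately show ?thesis
    by blast
qed

section \<open>A single branch of a projective system\<close>

text \<open>The data of a single path \<open>\<lambda>\<close>: \<open>\<tau> = \<sigma>\<^sub>\<lambda> : Z(s(\<lambda>)) \<rightarrow> Z(\<lambda>)\<close>,
  \<open>\<sigma> = \<sigma>\<^bsup>d(\<lambda>)\<^esup>\<close> and \<open>F = f\<^sub>\<lambda>\<close>; then \<open>branch_op\<close> is \<open>T\<^sub>\<lambda>\<close> on \<open>L\<^sup>2(\<mu>\<^sub>E)\<close> and
  \<open>branch_adj\<close> its adjoint.\<close>

locale projective_branch =
  fixes M :: "'a measure" and E D R :: "'a set" and \<tau> \<sigma> :: "'a \<Rightarrow> 'a" and F :: "'a \<Rightarrow> complex"
  assumes coding_measurable: "\<sigma> \<in> M \<rightarrow>\<^sub>M M"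
    and sets_D: "D \<in> sets M" and sets_R: "R \<in> sets M" and sets_E: "E \<in> sets M"
    and prefix_measurable: "\<tau> \<in> restrict_space M D \<rightarrow>\<^sub>M M"
    and image_prefix: "\<tau> ` D = R"
    and coding_prefix: "\<And>x. x \<in> D \<Longrightarrow> \<sigma> (\<tau> x) = x"
    and nonsingular: "\<exists>g\<in>borel_measurable M. (AE x in M. x \<in> D \<longrightarrow> g x > 0) \<and>
        (\<forall>B\<in>sets M. B \<subseteq> D \<longrightarrow> \<tau> ` B \<in> sets M \<and> emeasure M (\<tau> ` B) = (\<integral>\<^sup>+ x\<in>B. g x \<partial>M))"
    and F_measurable: "F \<in> borel_measurable M"
    and pushforward: "\<And>B. B \<in> sets M \<Longrightarrow>
        emeasure M (\<tau> -` B \<inter> D) = (\<integral>\<^sup>+ x\<in>B. ennreal ((cmod (F x))\<^sup>2) \<partial>M)"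
    and invariant: "emeasure M (symdiff E (\<sigma> -` E \<inter> space M)) = 0"
begin

abbreviation branch_op :: "('a \<Rightarrow> complex) \<Rightarrow> 'a \<Rightarrow> complex" where
  "branch_op g \<equiv> \<lambda>x. F x * g (\<sigma> x)"

abbreviation branch_adj :: "('a \<Rightarrow> complex) \<Rightarrow> 'a \<Rightarrow> complex" where
  "branch_adj u \<equiv> \<lambda>y. indicator D y * (u (\<tau> y) / F (\<tau> y))"

lemma space_restrict_D: "space (restrict_space M D) = D"
  using sets.sets_into_space[OF sets_D] by (auto simp: space_restrict_space)

lemma prefix_in_space: "x \<in> D \<Longrightarrow> \<tau> x \<in> space M"
  using measurable_space[OF prefix_measurable] by (simp add: space_restrict_D)

lemma sets_prefix_vimage: "B \<in> sets M \<Longrightarrow> \<tau> -` B \<inter> D \<in> sets M"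
  using measurable_sets[OF prefix_measurable] sets_D
  by (simp add: space_restrict_D sets_restrict_space_iff)

lemma coding_mem_D: "x \<in> R \<Longrightarrow> \<sigma> x \<in> D"
  and prefix_coding: "x \<in> R \<Longrightarrow> \<tau> (\<sigma> x) = x"
  using image_prefix coding_prefix by auto

lemma density_eq_distr_prefix:
  "density M (\<lambda>x. ennreal ((cmod (F x))\<^sup>2)) = distr (restrict_space M D) M \<tau>"
proof (rule measure_eqI)
  fix B assume "B \<in> sets (density M (\<lambda>x. ennreal ((cmod (F x))\<^sup>2)))"
  then have B: "B \<in> sets M"
    by simp
  have "emeasure (distr (restrict_space M D) M \<tau>) B = emeasure M (\<tau> -` B \<inter> D)"
    using B sets_D sets_prefix_vimage[OF B]
    by (simp add: emeasure_distr[OF prefix_measurable B] space_restrict_D emeasure_restrict_space)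
  also have "\<dots> = emeasure (density M (\<lambda>x. ennreal ((cmod (F x))\<^sup>2))) B"
    using B F_measurable by (simp add: pushforward emeasure_density)
  finally show "emeasure (density M (\<lambda>x. ennreal ((cmod (F x))\<^sup>2))) B
      = emeasure (distr (restrict_space M D) M \<tau>) B" ..
qed simp

lemma nn_integral_prefix:
  assumes \<Phi>: "\<Phi> \<in> borel_measurable M"
  shows "(\<integral>\<^sup>+ x. ennreal ((cmod (F x))\<^sup>2) * \<Phi> x \<partial>M) = (\<integral>\<^sup>+ x. \<Phi> (\<tau> x) * indicator D x \<partial>M)"
proof -
  have "(\<integral>\<^sup>+ x. ennreal ((cmod (F x))\<^sup>2) * \<Phi> x \<partial>M)
      = (\<integral>\<^sup>+ x. \<Phi> x \<partial>density M (\<lambda>x. ennreal ((cmod (F x))\<^sup>2)))"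
    using F_measurable \<Phi> by (subst nn_integral_density) auto
  also have "\<dots> = (\<integral>\<^sup>+ x. \<Phi> (\<tau> x) \<partial>restrict_space M D)"
    using \<Phi> prefix_measurable by (simp add: density_eq_distr_prefix nn_integral_distr)
  also have "\<dots> = (\<integral>\<^sup>+ x. \<Phi> (\<tau> x) * indicator D x \<partial>M)"
    using sets_D by (subst nn_integral_restrict_space) auto
  finally show ?thesis .
qed

lemma integral_prefix:
  fixes \<Phi> :: "'a \<Rightarrow> complex"
  assumes \<Phi>: "\<Phi> \<in> borel_measurable M"
  shows "(LINT x|M. (cmod (F x))\<^sup>2 *\<^sub>R \<Phi> x) = (LINT x|M. indicator D x *\<^sub>R \<Phi> (\<tau> x))"
proof -
  have "(LINT x|M. (cmod (F x))\<^sup>2 *\<^sub>R \<Phi> x) = (LINT x|density M (\<lambda>x. ennreal ((cmod (F x))\<^sup>2)). \<Phi> x)"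
    using F_measurable \<Phi> by (subst integral_density) auto
  also have "\<dots> = (LINT x|restrict_space M D. \<Phi> (\<tau> x))"
    using \<Phi> prefix_measurable by (simp add: density_eq_distr_prefix integral_distr)
  also have "\<dots> = (LINT x|M. indicator D x *\<^sub>R \<Phi> (\<tau> x))"
    using sets_D by (subst integral_restrict_space) auto
  finally show ?thesis .
qed

lemma borel_measurable_indicator_prefix:
  fixes \<Phi> :: "'a \<Rightarrow> 'b::{banach,second_countable_topology}"
  assumes \<Phi>: "\<Phi> \<in> borel_measurable M"
  shows "(\<lambda>x. indicator D x *\<^sub>R \<Phi> (\<tau> x)) \<in> borel_measurable M"
  using measurable_compose[OF prefix_measurable \<Phi>] sets_D
  by (subst borel_measurable_restrict_space_iff[symmetric]) auto

lemma AE_prefix_mem_iff: "AE x in M. x \<in> D \<longrightarrow> (\<tau> x \<in> E \<longleftrightarrow> x \<in> E)"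
proof -
  define Z where "Z = symdiff E (\<sigma> -` E \<inter> space M)"
  have Z: "Z \<in> null_sets M"
    unfolding Z_def symdiff_def using coding_measurable sets_E invariant
    by (auto simp: symdiff_def null_sets_def)
  have "emeasure M (\<tau> -` Z \<inter> D) = 0"
    using pushforward[OF null_setsD2[OF Z]] Z by (simp add: nn_integral_null_set)
  then have "\<tau> -` Z \<inter> D \<in> null_sets M"
    using sets_prefix_vimage[OF null_setsD2[OF Z]] by (rule null_setsI)
  then show ?thesis
  proof (rule AE_not_in[THEN eventually_mono], intro impI)
    fix x assume "x \<notin> \<tau> -` Z \<inter> D" "x \<in> D"
    then show "\<tau> x \<in> E \<longleftrightarrow> x \<in> E"
      using prefix_in_space[of x] coding_prefix[of x] by (auto simp: Z_def symdiff_def)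
  qed
qed

lemma AE_F_eq_0_outside: "AE x in M. x \<notin> R \<longrightarrow> F x = 0"
proof -
  have "(\<integral>\<^sup>+ x\<in>space M - R. ennreal ((cmod (F x))\<^sup>2) \<partial>M) = emeasure M (\<tau> -` (space M - R) \<inter> D)"
    using sets_R by (simp add: pushforward)
  also have "\<tau> -` (space M - R) \<inter> D = {}"
    using image_prefix by auto
  finally have "AE x in M. ennreal ((cmod (F x))\<^sup>2) * indicator (space M - R) x = 0"
    using F_measurable sets_R by (subst nn_integral_0_iff_AE[symmetric]) auto
  then show ?thesis
    by (auto elim: eventually_mono simp: indicator_def)
qed

lemma AE_F_neq_0_inside: "AE x in M. x \<in> R \<longrightarrow> F x \<noteq> 0"
proof -
  obtain g where g: "\<And>B. B \<in> sets M \<Longrightarrow> B \<subseteq> D \<Longrightarrow>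
      \<tau> ` B \<in> sets M \<and> emeasure M (\<tau> ` B) = (\<integral>\<^sup>+ x\<in>B. g x \<partial>M)"
    using nonsingular by blast
  define Z where "Z = {x \<in> space M. x \<in> R \<and> F x = 0}"
  have Z: "Z \<in> sets M"
    unfolding Z_def using sets_R F_measurable by measurable
  define C where "C = \<tau> -` Z \<inter> D"
  have C: "C \<in> null_sets M"
  proof -
    have "emeasure M C = (\<integral>\<^sup>+ x\<in>Z. ennreal ((cmod (F x))\<^sup>2) \<partial>M)"
      unfolding C_def using Z by (rule pushforward)
    also have "\<dots> = 0"
      by (auto intro!: nn_integral_zero' simp: Z_def indicator_def)
    finally show ?thesis
      using sets_prefix_vimage[OF Z] unfolding C_def by (rule null_setsI)
  qed
  have "\<tau> ` C = Z"
    using image_prefix sets.sets_into_space[OF sets_R] unfolding C_def Z_def by auto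
  moreover have "emeasure M (\<tau> ` C) = 0"
    using g[of C] C by (auto simp: C_def nn_integral_null_set)
  ultimately have "Z \<in> null_sets M"
    using Z by auto
  then have "AE x in M. x \<notin> Z"
    by (rule AE_not_in)
  then show ?thesis
    by (auto elim!: eventually_mono simp: Z_def)
qed

end

lemma mult_cnj_eq_scaleR_cnj_divide:
  fixes z v :: complex
  shows "z * cnj v = (cmod z)\<^sup>2 *\<^sub>R cnj (v / z)"
proof (cases "z = 0")
  case False
  have "(cmod z)\<^sup>2 *\<^sub>R cnj (v / z) = z * cnj z * (cnj v / cnj z)"
    by (simp only: scaleR_conv_of_real complex_norm_square complex_cnj_divide)
  with False show ?thesis
    by simp
qed simp

context projective_branch
begin

lemma branch_op_L2:
  assumes g: "g \<in> L2 (restr_measure M E)"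
  shows "branch_op g \<in> L2 (restr_measure M E)"
proof -
  have gm: "g \<in> borel_measurable M"
    and gi: "(\<integral>\<^sup>+ x. ennreal (indicator E x * (cmod (g x))\<^sup>2) \<partial>M) < \<infinity>"
    using g L2_restr_measure_iff[OF sets_E] by auto
  have g\<sigma>: "(\<lambda>x. g (\<sigma> x)) \<in> borel_measurable M"
    using measurable_compose[OF coding_measurable gm] .
  define \<Phi> where "\<Phi> x = ennreal (indicator E x * (cmod (g (\<sigma> x)))\<^sup>2)" for x
  have \<Phi>: "\<Phi> \<in> borel_measurable M"
    unfolding \<Phi>_def using g\<sigma> sets_E by measurable
  have "(\<integral>\<^sup>+ x. ennreal (indicator E x * (cmod (F x * g (\<sigma> x)))\<^sup>2) \<partial>M)
      = (\<integral>\<^sup>+ x. ennreal ((cmod (F x))\<^sup>2) * \<Phi> x \<partial>M)"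
    unfolding \<Phi>_def
    by (intro nn_integral_cong) (simp add: ennreal_mult'[symmetric] norm_mult power_mult_distrib algebra_simps)
  also have "\<dots> = (\<integral>\<^sup>+ x. \<Phi> (\<tau> x) * indicator D x \<partial>M)"
    by (rule nn_integral_prefix[OF \<Phi>])
  also have "\<dots> = (\<integral>\<^sup>+ x. ennreal (indicator E x * (cmod (g x))\<^sup>2) * indicator D x \<partial>M)"
    using AE_prefix_mem_iff
    by (intro nn_integral_cong_AE, eventually_elim) (auto simp: \<Phi>_def indicator_def coding_prefix)
  also have "\<dots> \<le> (\<integral>\<^sup>+ x. ennreal (indicator E x * (cmod (g x))\<^sup>2) \<partial>M)"
    by (intro nn_integral_mono) (auto simp: indicator_def)
  finally show ?thesis
    using gi F_measurable g\<sigma> L2_restr_measure_iff[OF sets_E] by auto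
qed

lemma branch_adj_L2:
  assumes u: "u \<in> L2 (restr_measure M E)"
  shows "branch_adj u \<in> L2 (restr_measure M E)"
proof -
  have um: "u \<in> borel_measurable M"
    and ui: "(\<integral>\<^sup>+ x. ennreal (indicator E x * (cmod (u x))\<^sup>2) \<partial>M) < \<infinity>"
    using u L2_restr_measure_iff[OF sets_E] by auto
  have "(\<lambda>y. indicator D y *\<^sub>R (u (\<tau> y) / F (\<tau> y))) \<in> borel_measurable M"
    using um F_measurable by (intro borel_measurable_indicator_prefix) measurable
  then have m: "branch_adj u \<in> borel_measurable M"
    by (simp add: scaleR_conv_of_real of_real_indicator)
  define \<Psi> where "\<Psi> z = ennreal (indicator E z * ((cmod (u z))\<^sup>2 / (cmod (F z))\<^sup>2))" for z
  have \<Psi>: "\<Psi> \<in> borel_measurable M"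
    unfolding \<Psi>_def using um F_measurable sets_E by measurable
  have "(\<integral>\<^sup>+ x. ennreal (indicator E x * (cmod (branch_adj u x))\<^sup>2) \<partial>M)
      = (\<integral>\<^sup>+ x. \<Psi> (\<tau> x) * indicator D x \<partial>M)"
    using AE_prefix_mem_iff
    by (intro nn_integral_cong_AE, eventually_elim)
      (auto simp: \<Psi>_def indicator_def norm_divide power_divide)
  also have "\<dots> = (\<integral>\<^sup>+ x. ennreal ((cmod (F x))\<^sup>2) * \<Psi> x \<partial>M)"
    by (rule nn_integral_prefix[OF \<Psi>, symmetric])
  also have "\<dots> \<le> (\<integral>\<^sup>+ x. ennreal (indicator E x * (cmod (u x))\<^sup>2) \<partial>M)"
  proof (intro nn_integral_mono)
    fix x
    have "(cmod (F x))\<^sup>2 * (indicator E x * ((cmod (u x))\<^sup>2 / (cmod (F x))\<^sup>2))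
        \<le> indicator E x * (cmod (u x))\<^sup>2"
      by (cases "F x = 0") (auto simp: indicator_def)
    then show "ennreal ((cmod (F x))\<^sup>2) * \<Psi> x \<le> ennreal (indicator E x * (cmod (u x))\<^sup>2)"
      unfolding \<Psi>_def by (simp add: ennreal_mult'[symmetric])
  qed
  finally show ?thesis
    using ui m L2_restr_measure_iff[OF sets_E] by auto
qed

lemma is_adjoint_branch_op: "is_adjoint (restr_measure M E) branch_op branch_adj"
  unfolding is_adjoint_def
proof (intro conjI ballI)
  fix g u assume g: "g \<in> L2 (restr_measure M E)" and u: "u \<in> L2 (restr_measure M E)"
  show "branch_adj u \<in> L2 (restr_measure M E)"
    using u by (rule branch_adj_L2)
  have gm: "g \<in> borel_measurable M" and um: "u \<in> borel_measurable M"
    using g u L2_restr_measure_iff[OF sets_E] by auto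
  have adj_m: "branch_adj u \<in> borel_measurable M"
    using branch_adj_L2[OF u] L2_restr_measure_iff[OF sets_E] by auto
  have g\<sigma>: "(\<lambda>x. g (\<sigma> x)) \<in> borel_measurable M"
    using measurable_compose[OF coding_measurable gm] .
  define \<Psi> where "\<Psi> x = indicator E x *\<^sub>R (g (\<sigma> x) * cnj (u x / F x))" for x
  have \<Psi>: "\<Psi> \<in> borel_measurable M"
    unfolding \<Psi>_def using g\<sigma> um F_measurable sets_E by measurable
  have "l2_inner (restr_measure M E) (branch_op g) u
      = (LINT x|M. indicator E x *\<^sub>R (F x * g (\<sigma> x) * cnj (u x)))"
    unfolding l2_inner_def using g\<sigma> um F_measurable by (subst integral_restr_measure[OF sets_E]) auto
  also have "\<dots> = (LINT x|M. (cmod (F x))\<^sup>2 *\<^sub>R \<Psi> x)"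
  proof (intro Bochner_Integration.integral_cong refl)
    fix x
    have "indicator E x *\<^sub>R (F x * g (\<sigma> x) * cnj (u x))
        = indicator E x *\<^sub>R (g (\<sigma> x) * (F x * cnj (u x)))"
      by (simp only: mult_ac)
    also have "\<dots> = (cmod (F x))\<^sup>2 *\<^sub>R \<Psi> x"
      unfolding mult_cnj_eq_scaleR_cnj_divide[of "F x"] \<Psi>_def
      by (simp only: mult_scaleR_right scaleR_left_commute)
    finally show "indicator E x *\<^sub>R (F x * g (\<sigma> x) * cnj (u x)) = (cmod (F x))\<^sup>2 *\<^sub>R \<Psi> x" .
  qed
  also have "\<dots> = (LINT x|M. indicator D x *\<^sub>R \<Psi> (\<tau> x))"
    by (rule integral_prefix[OF \<Psi>])
  also have "\<dots> = (LINT x|M. indicator E x *\<^sub>R (g x * cnj (branch_adj u x)))"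
  proof (rule integral_cong_AE)
    show "(\<lambda>x. indicator D x *\<^sub>R \<Psi> (\<tau> x)) \<in> borel_measurable M"
      by (rule borel_measurable_indicator_prefix[OF \<Psi>])
    show "(\<lambda>x. indicator E x *\<^sub>R (g x * cnj (branch_adj u x))) \<in> borel_measurable M"
      using gm adj_m sets_E by measurable
    show "AE x in M. indicator D x *\<^sub>R \<Psi> (\<tau> x) = indicator E x *\<^sub>R (g x * cnj (branch_adj u x))"
      using AE_prefix_mem_iff by eventually_elim (auto simp: \<Psi>_def indicator_def coding_prefix)
  qed
  also have "\<dots> = l2_inner (restr_measure M E) g (branch_adj u)"
  proof -
    have "(\<lambda>x. g x * cnj (branch_adj u x)) \<in> borel_measurable M"
      using gm adj_m by measurable
    then show ?thesis
      unfolding l2_inner_def by (rule integral_restr_measure[OF sets_E, symmetric])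
  qed
  finally show "l2_inner (restr_measure M E) (branch_op g) u
      = l2_inner (restr_measure M E) g (branch_adj u)" .
qed

lemma AE_branch_op_adj: "AE x in restr_measure M E. branch_op (branch_adj u) x = indicator R x * u x"
proof (rule AE_restr_measure[OF sets_E])
  show "AE x in M. branch_op (branch_adj u) x = indicator R x * u x"
    using AE_F_eq_0_outside AE_F_neq_0_inside
    by eventually_elim (auto simp: indicator_def coding_mem_D prefix_coding)
qed

text \<open>\<open>T T\<^sup>*\<close> is multiplication by the indicator of the range, so anything commuting with \<open>T\<close>
  and \<open>T\<^sup>*\<close> commutes with that indicator.\<close>

lemma commutes_indicator_range:
  assumes A: "bounded_op (restr_measure M E) A"
    and comm: "commutes (restr_measure M E) A branch_op"
    and comm_adj: "commutes (restr_measure M E) A branch_adj"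
  shows "commutes_indicator (restr_measure M E) A R"
  unfolding commutes_indicator_def
proof
  let ?N = "restr_measure M E"
  fix g assume g: "g \<in> L2 ?N"
  have Ag: "A g \<in> L2 ?N"
    by (rule bounded_op_L2[OF A g])
  have "AE x in ?N. A (\<lambda>y. indicator R y * g y) x = A (branch_op (branch_adj g)) x"
    using AE_branch_op_adj[of g] sets_R
    by (intro bounded_op_AE_cong[OF A] L2_indicator_mult g branch_op_L2 branch_adj_L2)
      (auto elim: eventually_mono)
  moreover have "AE x in ?N. A (branch_op (branch_adj g)) x = branch_op (A (branch_adj g)) x"
    using comm branch_adj_L2[OF g] unfolding commutes_def by auto
  moreover have "AE x in ?N. branch_op (A (branch_adj g)) x = branch_op (branch_adj (A g)) x"
    using comm_adj g unfolding commutes_def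
    by (intro is_adjoint_AE_cong[OF is_adjoint_branch_op] branch_op_L2 bounded_op_L2[OF A]
        branch_adj_L2 Ag) auto
  moreover have "AE x in ?N. branch_op (branch_adj (A g)) x = indicator R x * A g x"
    by (rule AE_branch_op_adj)
  ultimately show "AE x in ?N. A (\<lambda>y. indicator R y * g y) x = indicator R x * A g x"
    by eventually_elim simp
qed

lemma multiplier_coding_invariant:
  assumes A: "bounded_op (restr_measure M E) A"
    and comm: "commutes (restr_measure M E) A branch_op"
    and w: "w \<in> L2 (restr_measure M E)" and w_nonzero: "\<And>x. x \<in> space M \<Longrightarrow> w x \<noteq> 0"
    and h: "h \<in> borel_measurable M" and bounded: "AE x in restr_measure M E. cmod (h x) \<le> K"
    and mult: "\<And>g. g \<in> L2 (restr_measure M E) \<Longrightarrow> AE x in restr_measure M E. A g x = h x * g x"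
  shows "AE x in restr_measure M E. x \<in> R \<longrightarrow> h (\<sigma> x) = h x"
proof -
  let ?N = "restr_measure M E"
  have "AE x in ?N. A (branch_op w) x = branch_op (A w) x"
    using comm w unfolding commutes_def by auto
  moreover have "AE x in ?N. A (branch_op w) x = h x * branch_op w x"
    using mult[OF branch_op_L2[OF w]] .
  moreover have "AE x in ?N. branch_op (A w) x = branch_op (\<lambda>y. h y * w y) x"
    using mult[OF w] h bounded
    by (intro is_adjoint_AE_cong[OF is_adjoint_branch_op] branch_op_L2 bounded_op_L2[OF A w]
        L2_mult_bounded[OF w]) auto
  moreover have "AE x in ?N. x \<in> R \<longrightarrow> F x \<noteq> 0"
    by (rule AE_restr_measure[OF sets_E AE_F_neq_0_inside])
  moreover have "AE x in ?N. x \<in> space M"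
    using AE_space[of ?N] by simp
  ultimately show ?thesis
  proof eventually_elim
    case (elim x)
    have "w (\<sigma> x) \<noteq> 0"
      using w_nonzero measurable_space[OF coding_measurable elim(5)] .
    then show ?case
      using elim(1-4) by auto
  qed
qed

end

section \<open>Projective systems on the infinite path space\<close>

locale restricted_projective_system =
  fixes k :: nat and G :: "('v, 'p) kgraph" and M :: "'p ipath measure"
    and f :: "'p \<Rightarrow> 'p ipath \<Rightarrow> complex" and E :: "'p ipath set"
  assumes kgraph: "kgraph k G"
    and space_M: "space M = inf_paths k G"
    and sets_M: "sets M = sigma_sets (inf_paths k G) (cyl k G ` paths G)"
    and cyl_finite: "\<And>l. l \<in> paths G \<Longrightarrow> emeasure M (cyl k G l) < \<infinity>"
    and projective: "Lambda_projective_system k G M (\<lambda>l. cyl k G (idp G (src G l))) (cyl k G)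
        (prefix k G) (shift k) f"
    and sets_E: "E \<in> sets M"
    and shift_invariant_E: "\<And>n. n \<in> Nk k \<Longrightarrow> emeasure M (symdiff E (shift k n -` E \<inter> space M)) = 0"
begin

lemma countable_paths: "countable (paths G)"
  using kgraph by (simp add: kgraph_def)

lemma deg_in_Nk: "l \<in> paths G \<Longrightarrow> deg G l \<in> Nk k"
  using kgraph by (simp add: kgraph_def)

lemma sets_cyl: "l \<in> paths G \<Longrightarrow> cyl k G l \<in> sets M"
  using sets_M by auto

lemma mem_cyl_initial_vertex:
  assumes x: "x \<in> space M"
  shows "x 0 0 \<in> paths G" "x \<in> cyl k G (x 0 0)"
proof -
  have "x \<in> inf_paths k G"
    using x space_M by simp
  then have "\<forall>m\<in>Nk k. x m m \<in> idp G ` verts G"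
    unfolding inf_paths_def mem_Collect_eq by (elim conjE)
  moreover have "(0 :: nat \<Rightarrow> nat) \<in> Nk k"
    by (simp add: Nk_def)
  ultimately obtain v where v: "v \<in> verts G" "x 0 0 = idp G v"
    by blast
  then have "idp G v \<in> paths G" "deg G (idp G v) = 0"
    using kgraph by (auto simp: kgraph_def)
  then show "x 0 0 \<in> paths G" "x \<in> cyl k G (x 0 0)"
    using v x space_M by (auto simp: cyl_def)
qed

lemma sigma_finite: "sigma_finite_measure M"
  unfolding sigma_finite_measure_def
proof (intro exI conjI)
  show "countable (cyl k G ` paths G)" "cyl k G ` paths G \<subseteq> sets M"
    using countable_paths sets_cyl by auto
  show "\<Union> (cyl k G ` paths G) = space M"
    using mem_cyl_initial_vertex space_M by (auto simp: cyl_def)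
  show "\<forall>a\<in>cyl k G ` paths G. emeasure M a \<noteq> \<infinity>"
    using cyl_finite by (simp add: less_top)
qed

lemma SBFS_deg: "n \<in> Nk k \<Longrightarrow>
    SBFS_deg k G M (\<lambda>l. cyl k G (idp G (src G l))) (cyl k G) (prefix k G) (shift k) n"
  using projective by (simp add: Lambda_projective_system_def Lambda_SBFS_def)

lemma shift_measurable: "n \<in> Nk k \<Longrightarrow> shift k n \<in> M \<rightarrow>\<^sub>M M"
  using SBFS_deg by (simp add: SBFS_deg_def)

lemma projective_branch_cyl:
  assumes l: "l \<in> paths G"
  shows "projective_branch M E (cyl k G (idp G (src G l))) (cyl k G l) (prefix k G l)
    (shift k (deg G l)) (f l)"
proof -
  note S = SBFS_deg[OF deg_in_Nk[OF l], unfolded SBFS_deg_def]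
  have "f l \<in> L2 M" "\<forall>B\<in>sets M. emeasure M (prefix k G l -` B \<inter> cyl k G (idp G (src G l)))
      = (\<integral>\<^sup>+ x\<in>B. ennreal ((cmod (f l x))\<^sup>2) \<partial>M)"
    using projective l by (auto simp: Lambda_projective_system_def)
  with S l show ?thesis
    using sets_E shift_invariant_E[OF deg_in_Nk[OF l]]
    unfolding projective_branch_def L2_def by blast
qed

lemma AE_mem_cyl_of_deg:
  assumes n: "n \<in> Nk k"
  shows "AE x in M. \<exists>l\<in>paths G. deg G l = n \<and> x \<in> cyl k G l"
proof -
  let ?U = "\<Union>l\<in>{l\<in>paths G. deg G l = n}. cyl k G l"
  have "?U \<in> sets M"
    using countable_paths sets_cyl by (intro sets.countable_UN'') (auto intro: countable_subset)
  then have "space M - ?U \<in> null_sets M"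
    using SBFS_deg[OF n] by (auto simp: SBFS_deg_def)
  then have "AE x in M. x \<notin> space M - ?U"
    by (rule AE_not_in)
  then show ?thesis
    by (auto elim: eventually_mono)
qed

lemma commutant_commutes_indicator:
  assumes A: "A \<in> commutant (restr_measure M E) (proj_rep_op G (shift k) f ` paths G)"
    and S: "S \<in> sets M"
  shows "commutes_indicator (restr_measure M E) A S"
proof (rule commutes_indicator_sigma_sets)
  show bounded: "bounded_op (restr_measure M E) A"
    using A by (simp add: commutant_def)
  show "sets (restr_measure M E) = sigma_sets (space (restr_measure M E)) (cyl k G ` paths G)"
    using sets_M space_M by simp
  fix C assume "C \<in> cyl k G ` paths G"
  then obtain l where l: "l \<in> paths G" and C: "C = cyl k G l"
    by auto
  interpret projective_branch M E "cyl k G (idp G (src G l))" "cyl k G l" "prefix k G l"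
    "shift k (deg G l)" "f l"
    by (rule projective_branch_cyl[OF l])
  have "commutes (restr_measure M E) A branch_op"
    and "\<forall>B. is_adjoint (restr_measure M E) branch_op B \<longrightarrow> commutes (restr_measure M E) A B"
    using A l unfolding commutant_def proj_rep_op_def[abs_def] by blast+
  then show "commutes_indicator (restr_measure M E) A C"
    unfolding C using bounded is_adjoint_branch_op by (blast intro: commutes_indicator_range)
qed (use S in simp)

lemma ex_L2_nonzero_restr: "\<exists>w. w \<in> L2 (restr_measure M E) \<and> (\<forall>x\<in>space M. w x \<noteq> 0)"
  using sigma_finite_measure.ex_L2_nonzero[OF sigma_finite_restr_measure[OF sigma_finite sets_E]]
  by simp

lemma multiplier_shift_invariant:
  assumes A: "A \<in> commutant (restr_measure M E) (proj_rep_op G (shift k) f ` paths G)"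
    and h: "h \<in> borel_measurable M" and bounded: "AE x in restr_measure M E. cmod (h x) \<le> K"
    and mult: "\<And>g. g \<in> L2 (restr_measure M E) \<Longrightarrow> AE x in restr_measure M E. A g x = h x * g x"
    and n: "n \<in> Nk k"
  shows "AE x in restr_measure M E. h (shift k n x) = h x"
proof -
  obtain w where w: "w \<in> L2 (restr_measure M E)" "\<And>x. x \<in> space M \<Longrightarrow> w x \<noteq> 0"
    using ex_L2_nonzero_restr by blast
  have "AE x in restr_measure M E. x \<in> cyl k G l \<longrightarrow> h (shift k n x) = h x"
    if l: "l \<in> {l \<in> paths G. deg G l = n}" for l
  proof -
    interpret projective_branch M E "cyl k G (idp G (src G l))" "cyl k G l" "prefix k G l"
      "shift k (deg G l)" "f l"
      using l by (intro projective_branch_cyl) simp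
    have "bounded_op (restr_measure M E) A" "commutes (restr_measure M E) A branch_op"
      using A l unfolding commutant_def proj_rep_op_def[abs_def] by blast+
    from multiplier_coding_invariant[OF this w h bounded mult] show ?thesis
      using l by simp
  qed
  then have "AE x in restr_measure M E. \<forall>l\<in>{l \<in> paths G. deg G l = n}.
      x \<in> cyl k G l \<longrightarrow> h (shift k n x) = h x"
    using countable_paths by (subst AE_ball_countable) (auto intro: countable_subset)
  moreover have "AE x in restr_measure M E. \<exists>l\<in>paths G. deg G l = n \<and> x \<in> cyl k G l"
    using sets_E AE_mem_cyl_of_deg[OF n] by (rule AE_restr_measure)
  ultimately show ?thesis
    by eventually_elim blast
qed

lemma commutant_imp_invariant_multiplier:
  assumes A: "A \<in> commutant (restr_measure M E) (proj_rep_op G (shift k) f ` paths G)"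
  shows "\<exists>h. h \<in> borel_measurable (restr_measure M E) \<and>
    (\<exists>C. AE x in restr_measure M E. cmod (h x) \<le> C) \<and>
    (\<forall>n\<in>Nk k. AE x in restr_measure M E. h (shift k n x) = h x) \<and>
    (\<forall>g\<in>L2 (restr_measure M E). AE x in restr_measure M E. A g x = h x * g x)"
proof -
  obtain w where w: "w \<in> L2 (restr_measure M E)" "\<And>x. x \<in> space (restr_measure M E) \<Longrightarrow> w x \<noteq> 0"
    using ex_L2_nonzero_restr by auto
  have "bounded_op (restr_measure M E) A"
    using A by (simp add: commutant_def)
  then obtain h C where h: "h \<in> borel_measurable M" and bounded: "AE x in restr_measure M E. cmod (h x) \<le> C"
    and mult: "\<forall>g\<in>L2 (restr_measure M E). AE x in restr_measure M E. A g x = h x * g x"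
    using ex_bounded_multiplier[OF _ commutant_commutes_indicator[OF A] w] by auto
  then show ?thesis
    using multiplier_shift_invariant[OF A h bounded] by auto
qed

lemma irreducible_if_jointly_ergodic:
  assumes ergodic: "jointly_ergodic_wrt (restr_measure M E) (shift k ` Nk k)"
  shows "irreducible_ops (restr_measure M E) (proj_rep_op G (shift k) f ` paths G)"
  unfolding irreducible_ops_def
proof
  fix A assume "A \<in> commutant (restr_measure M E) (proj_rep_op G (shift k) f ` paths G)"
  then obtain h C where h: "h \<in> borel_measurable (restr_measure M E)"
    and bounded: "AE x in restr_measure M E. cmod (h x) \<le> C"
    and invariant: "\<forall>n\<in>Nk k. AE x in restr_measure M E. h (shift k n x) = h x"
    and mult: "\<forall>g\<in>L2 (restr_measure M E). AE x in restr_measure M E. A g x = h x * g x"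
    using commutant_imp_invariant_multiplier by blast
  have "T \<in> restr_measure M E \<rightarrow>\<^sub>M restr_measure M E" "AE x in restr_measure M E. h (T x) = h x"
    if "T \<in> shift k ` Nk k" for T
    using that shift_measurable invariant by auto
  then obtain c where c: "AE x in restr_measure M E. h x = c"
    using AE_eq_const_if_jointly_ergodic[OF ergodic _ _ h bounded] by blast
  have "AE x in restr_measure M E. A g x = c * g x" if g: "g \<in> L2 (restr_measure M E)" for g
    using mult[rule_format, OF g] c by eventually_elim simp
  then show "\<exists>c. \<forall>g\<in>L2 (restr_measure M E). AE x in restr_measure M E. A g x = c * g x"
    by blast
qed

end

theorem theorem4p15:
  fixes k :: nat and G :: "('v, 'p) kgraph" and M :: "'p ipath measure"
    and f :: "'p \<Rightarrow> 'p ipath \<Rightarrow> complex" and E :: "'p ipath set"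
  assumes kg: "kgraph k G"
    and rf: "row_finite_no_sources k G"
    and space_M: "space M = inf_paths k G"
    and sets_M: "sets M = sigma_sets (inf_paths k G) (cyl k G ` paths G)"
    and cyl_fin: "\<forall>l\<in>paths G. emeasure M (cyl k G l) < \<infinity>"
    and proj: "Lambda_projective_system k G M (\<lambda>l. cyl k G (idp G (src G l))) (cyl k G)
                 (prefix k G) (shift k) f"
    and E_meas: "E \<in> sets M"
    and E_inv: "\<forall>n\<in>Nk k. emeasure M (symdiff E (shift k n -` E \<inter> space M)) = 0"
    and E_pos: "\<forall>v\<in>verts G. emeasure M (E \<inter> cyl k G (idp G v)) > 0"
  shows
    "(\<forall>A\<in>commutant (restr_measure M E) (proj_rep_op G (shift k) f ` paths G).
        \<exists>h. h \<in> borel_measurable (restr_measure M E) \<and>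
            (\<exists>C. AE x in restr_measure M E. cmod (h x) \<le> C) \<and>
            (\<forall>n\<in>Nk k. AE x in restr_measure M E. h (shift k n x) = h x) \<and>
            (\<forall>g\<in>L2 (restr_measure M E). AE x in restr_measure M E. A g x = h x * g x))
     \<and> ((\<exists>n\<in>Nk k. ergodic_wrt (restr_measure M E) (shift k n)) \<longrightarrow>
          irreducible_ops (restr_measure M E) (proj_rep_op G (shift k) f ` paths G))
     \<and> (jointly_ergodic_wrt (restr_measure M E) (shift k ` Nk k) \<longrightarrow>
          irreducible_ops (restr_measure M E) (proj_rep_op G (shift k) f ` paths G))"
proof -
  interpret restricted_projective_system k G M f E
    using kg space_M sets_M cyl_fin proj E_meas E_inv by unfold_locales auto
  have "jointly_ergodic_wrt (restr_measure M E) (shift k ` Nk k)"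
    if "ergodic_wrt (restr_measure M E) (shift k n)" "n \<in> Nk k" for n
    using that by (intro ergodic_imp_jointly_ergodic[of "shift k n"]) auto
  then show ?thesis
    using commutant_imp_invariant_multiplier irreducible_if_jointly_ergodic by blast
qed

end
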